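(* Consider the asynchronous best response dynamics $Z(t)$ described in the context, with an arbitrary distribution of the initial configuration $Z(0)$ on $[0,1]^n$. Then there exists a nonnegative random time $T$ with $\mathbb P(T<+\infty)=1$ such that $Z_i(t)<1$ for every $i\in\mathcal V$ and every $t\ge T$.
   Context: Let $n\ge1$ and $\mathcal V=\{1,\dots,n\}$. Let $P\in\mathbb{R}^{n\times n}$ be a row-stochastic, irreducible, aperiodic matrix (the graph on $\mathcal V$ with edge $(i,j)$ iff $P_{ij}>0$ is strongly connected with gcd of cycle lengths $1$). For $z\in[0,1]^n$, $W(z)=(I-[z])P+[z]$ ($[z]$ the diagonal matrix with diagonal $z$) and $H(z)=\lim_{t\to\infty}W(z)^t$ (the limit exists and is row-stochastic). Let $\sigma_1^2,\dots,\sigma_n^2>0$. Agent $i$'s cost is $\upsilon_i(z)=\sum_jH_{ij}(z)^2\sigma_j^2$, and her best response set to $z_{-i}=(z_j)_{j\ne i}$ is $\mathcal B_i(z_{-i})=\arg\min_{z_i\in[0,1]}\upsilon_i(z_i,z_{-i})$ (always nonempty; a singleton or an interval). The asynchronous best response dynamics is the discrete-time Markov chain $Z(t)$ on $[0,1]^n$ in which, at each time $t=0,1,2,\dots$, an agent $k$ is chosen uniformly at random from $\mathcal V$, $Z_k(t+1)$ is drawn uniformly at random from $\mathcal B_k(Z_{-k}(t))$, and $Z_{-k}(t+1)=Z_{-k}(t)$. *)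

theory Defs
  imports "HOL-Probability.Probability"
begin

primrec matpow :: "real^'n^'n \<Rightarrow> nat \<Rightarrow> real^'n^'n" where
  "matpow A 0 = mat 1"
| "matpow A (Suc t) = matpow A t ** A"

definition row_stochastic :: "real^'n^'n \<Rightarrow> bool" where
  "row_stochastic P \<longleftrightarrow> (\<forall>i j. P $ i $ j \<ge> 0) \<and> (\<forall>i. (\<Sum>j\<in>UNIV. P $ i $ j) = 1)"

definition edges :: "real^'n^'n \<Rightarrow> ('n \<times> 'n) set" where
  "edges P = {(i, j). P $ i $ j > 0}"

definition irreducible_mat :: "real^'n^'n \<Rightarrow> bool" where
  "irreducible_mat P \<longleftrightarrow> (\<forall>i j. (i, j) \<in> (edges P)\<^sup>*)"

definition aperiodic_mat :: "real^'n^'n \<Rightarrow> bool" where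
  "aperiodic_mat P \<longleftrightarrow> Gcd {m. m > 0 \<and> (\<exists>i. (i, i) \<in> (edges P) ^^ m)} = (1::nat)"

definition diagm :: "real^'n \<Rightarrow> real^'n^'n" where
  "diagm z = (\<chi> i j. if i = j then z $ i else 0)"

definition Wmat :: "real^'n^'n \<Rightarrow> real^'n \<Rightarrow> real^'n^'n" where
  "Wmat P z = (mat 1 - diagm z) ** P + diagm z"

definition Hmat :: "real^'n^'n \<Rightarrow> real^'n \<Rightarrow> real^'n^'n" where
  "Hmat P z = lim (\<lambda>t. matpow (Wmat P z) t)"

definition cost :: "real^'n^'n \<Rightarrow> real^'n \<Rightarrow> 'n \<Rightarrow> real^'n \<Rightarrow> real" where
  "cost P \<sigma>2 i z = (\<Sum>j\<in>UNIV. (Hmat P z $ i $ j)\<^sup>2 * \<sigma>2 $ j)"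

definition upd :: "real^'n \<Rightarrow> 'n \<Rightarrow> real \<Rightarrow> real^'n" where
  "upd z k x = (\<chi> j. if j = k then x else z $ j)"

text \<open>Best response of agent i to z_{-i} (the i-th component of z is irrelevant).\<close>
definition best_resp :: "real^'n^'n \<Rightarrow> real^'n \<Rightarrow> 'n \<Rightarrow> real^'n \<Rightarrow> real set" where
  "best_resp P \<sigma>2 i z = {x \<in> {0..1}. \<forall>y\<in>{0..1}. cost P \<sigma>2 i (upd z i x) \<le> cost P \<sigma>2 i (upd z i y)}"

text \<open>Uniform distribution on a set: Dirac mass on a singleton, otherwise
  normalised Lebesgue measure (the set is then a nondegenerate interval).\<close>
definition unif :: "real set \<Rightarrow> real measure" where
  "unif S = (if \<exists>b. S = {b} then return borel (THE b. S = {b}) else uniform_measure lborel S)"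

definition br_kernel :: "real^'n^'n \<Rightarrow> real^'n \<Rightarrow> real^'n \<Rightarrow> (real^'n) set \<Rightarrow> ennreal" where
  "br_kernel P \<sigma>2 z A =
     (\<Sum>k\<in>UNIV. emeasure (unif (best_resp P \<sigma>2 k z)) {x. upd z k x \<in> A}) / of_nat CARD('n)"

text \<open>Z is a (discrete time) Markov chain on the probability space M with the above kernel
  (arbitrary initial law): finite dimensional distributions are given by the kernel.\<close>
definition is_br_dynamics :: "'a measure \<Rightarrow> real^'n^'n \<Rightarrow> real^'n \<Rightarrow> (nat \<Rightarrow> 'a \<Rightarrow> real^'n) \<Rightarrow> bool" where
  "is_br_dynamics M P \<sigma>2 Z \<longleftrightarrow>
     prob_space M \<and> (\<forall>t. Z t \<in> M \<rightarrow>\<^sub>M borel) \<and>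
     (\<forall>t (A :: nat \<Rightarrow> (real^'n) set). (\<forall>s. A s \<in> sets borel) \<longrightarrow>
        emeasure M {\<omega> \<in> space M. \<forall>s\<le>Suc t. Z s \<omega> \<in> A s} =
        (\<integral>\<^sup>+ \<omega>. indicator {\<omega> \<in> space M. \<forall>s\<le>t. Z s \<omega> \<in> A s} \<omega>
                   * br_kernel P \<sigma>2 (Z t \<omega>) (A (Suc t)) \<partial>M))"

end

theory Submission
  imports Defs
begin

text \<open>Call agent \<open>i\<close> stubborn if \<open>z\<^sub>i = 1\<close>. Without stubborn agents, \<open>W(z)\<close> inherits
  irreducibility and aperiodicity from \<open>P\<close>, and every row of \<open>H(z)\<close> is proportional to
  \<open>\<mu>\<^sub>l / (1 - z\<^sub>l)\<close>, where \<open>\<mu>\<close> is the positive stationary vector of \<open>P\<close>. The cost of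
  agent \<open>k\<close> is then a ratio of quadratics in \<open>\<mu>\<^sub>k / (1 - z\<^sub>k)\<close>, and its best response is
  either a single point below \<open>1\<close> or all of \<open>[0,1]\<close>; so almost surely no stubborn agent
  ever reappears. With stubborn agents, \<open>H(z)\<close> is the absorption matrix of \<open>W(z)\<close>, which
  by the maximum principle depends only on the set of stubborn agents. The stubborn agent of
  largest variance gains nothing by staying stubborn, so its best responses cover \<open>[0,1)\<close>
  and, once drawn, it leaves \<open>1\<close> almost surely. From any profile this happens to all
  stubborn agents within \<open>n\<close> steps with probability at least \<open>n\<^sup>-\<^sup>n\<close>, so the probability of
  never reaching a profile without stubborn agents decays geometrically; \<open>T\<close> is the first time
  from which no agent is stubborn any more.\<close>

section \<open>Stochastic matrices\<close>

lemma mat_1_nth: "(mat 1 :: real^'n^'n) $ i $ j = (if i = j then 1 else 0)"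
  by (simp add: mat_def)

lemma matrix_mult_nth: "(A ** B) $ i $ j = (\<Sum>k\<in>UNIV. A $ i $ k * B $ k $ j)"
  by (simp add: matrix_matrix_mult_def)

lemma matpow_add: "matpow W (a + b) = matpow W a ** matpow W b"
  by (induction b) (simp_all add: matrix_mul_assoc)

lemma matpow_Suc_left: "matpow W (Suc t) = W ** matpow W t"
  using matpow_add[of W 1 t] by simp

lemma row_stochastic_nonneg: "row_stochastic W \<Longrightarrow> 0 \<le> W $ i $ j"
  unfolding row_stochastic_def by auto

lemma row_stochastic_row_sum: "row_stochastic W \<Longrightarrow> (\<Sum>j\<in>UNIV. W $ i $ j) = 1"
  unfolding row_stochastic_def by auto

lemma row_stochastic_le_1:
  assumes W: "row_stochastic W"
  shows "W $ i $ j \<le> 1"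
proof -
  have "W $ i $ j \<le> (\<Sum>j\<in>UNIV. W $ i $ j)"
    by (rule member_le_sum) (auto intro: row_stochastic_nonneg[OF W])
  then show ?thesis using row_stochastic_row_sum[OF W] by simp
qed

lemma row_stochastic_mat_1: "row_stochastic (mat 1 :: real^'n^'n)"
  unfolding row_stochastic_def mat_1_nth by auto

lemma row_stochastic_mult:
  assumes A: "row_stochastic A" and B: "row_stochastic B"
  shows "row_stochastic (A ** B)"
proof -
  have "(\<Sum>j\<in>UNIV. (A ** B) $ i $ j) = (\<Sum>k\<in>UNIV. A $ i $ k * (\<Sum>j\<in>UNIV. B $ k $ j))" for i
    unfolding matrix_mult_nth sum_distrib_left by (rule sum.swap)
  then show ?thesis
    using A B unfolding row_stochastic_def matrix_mult_nth
    by (auto intro!: sum_nonneg mult_nonneg_nonneg)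
qed

lemma row_stochastic_matpow: "row_stochastic W \<Longrightarrow> row_stochastic (matpow W t)"
  by (induction t) (auto intro: row_stochastic_mult row_stochastic_mat_1)

lemma row_stochastic_mult_ge:
  assumes "row_stochastic A" "row_stochastic B"
  shows "A $ i $ k * B $ k $ j \<le> (A ** B) $ i $ j"
  unfolding matrix_mult_nth
  by (rule member_le_sum[where f="\<lambda>k. A $ i $ k * B $ k $ j"])
     (auto intro!: mult_nonneg_nonneg row_stochastic_nonneg assms)

lemma sum_nonneg_pos_iff:
  fixes f :: "'a \<Rightarrow> real"
  assumes "finite A" "\<And>x. x \<in> A \<Longrightarrow> 0 \<le> f x"
  shows "0 < sum f A \<longleftrightarrow> (\<exists>x\<in>A. 0 < f x)"
proof
  show "\<exists>x\<in>A. 0 < f x" if "0 < sum f A"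
  proof (rule ccontr)
    assume "\<not> (\<exists>x\<in>A. 0 < f x)"
    then have "sum f A \<le> 0" by (intro sum_nonpos) (auto simp: not_less)
    then show False using that by simp
  qed
  show "0 < sum f A" if "\<exists>x\<in>A. 0 < f x"
    using that assms by (auto intro: sum_pos2)
qed

lemma relpow_edges_iff_matpow_pos:
  assumes W: "row_stochastic W"
  shows "(i, j) \<in> edges W ^^ m \<longleftrightarrow> 0 < matpow W m $ i $ j"
proof (induction m arbitrary: j)
  case 0
  then show ?case by (simp add: mat_1_nth)
next
  case (Suc m)
  have nonneg: "0 \<le> matpow W m $ i $ k * W $ k $ j" for k
    by (intro mult_nonneg_nonneg row_stochastic_nonneg row_stochastic_matpow W)
  have pos_iff: "(i, k) \<in> edges W ^^ m \<and> 0 < W $ k $ j \<longleftrightarrow> 0 < matpow W m $ i $ k * W $ k $ j" for k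
    using Suc.IH[of k] row_stochastic_nonneg[OF row_stochastic_matpow[OF W], of m i k]
      row_stochastic_nonneg[OF W, of k j]
    by (simp add: zero_less_mult_iff less_le)
  have "(i, j) \<in> edges W ^^ Suc m \<longleftrightarrow> (\<exists>k. (i, k) \<in> edges W ^^ m \<and> 0 < W $ k $ j)"
    by (auto simp: edges_def)
  also have "\<dots> \<longleftrightarrow> (\<exists>k. 0 < matpow W m $ i $ k * W $ k $ j)"
    using pos_iff by blast
  also have "\<dots> \<longleftrightarrow> 0 < matpow W (Suc m) $ i $ j"
    using sum_nonneg_pos_iff[of UNIV "\<lambda>k. matpow W m $ i $ k * W $ k $ j"] nonneg
    by (simp add: matrix_mult_nth)
  finally show ?case .
qed

lemma irreducible_relpow:
  assumes "irreducible_mat W"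
  shows "\<exists>m. (i, j) \<in> edges W ^^ m"
  using assms unfolding irreducible_mat_def by (metis rtrancl_power)

section \<open>Aperiodicity\<close>

lemma add_closed_mult_mem:
  fixes A :: "nat set"
  assumes add: "\<And>a b. a \<in> A \<Longrightarrow> b \<in> A \<Longrightarrow> a + b \<in> A" and a: "a \<in> A" and k: "1 \<le> k"
  shows "k * a \<in> A"
  using k
proof (induction k)
  case (Suc k)
  then show ?case by (cases "k = 0") (auto simp: a add)
qed simp

text \<open>The least positive difference \<open>\<delta>\<close> of two elements of \<open>A\<close> divides every element:
  otherwise \<open>a mod \<delta>\<close> would be a smaller one.\<close>

lemma add_closed_Gcd_eq_1_consecutive:
  fixes A :: "nat set"
  assumes add: "\<And>a b. a \<in> A \<Longrightarrow> b \<in> A \<Longrightarrow> a + b \<in> A"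
    and nz: "0 \<notin> A" and ne: "A \<noteq> {}" and g: "Gcd A = 1"
  obtains b where "b \<in> A" "b + 1 \<in> A"
proof -
  define D where "D = {d. 0 < d \<and> (\<exists>b\<in>A. b + d \<in> A)}"
  obtain a0 where a0: "a0 \<in> A" using ne by auto
  moreover have "0 < a0" using nz a0 by (cases a0) auto
  ultimately have "a0 \<in> D" using add[OF a0 a0] unfolding D_def by auto
  define \<delta> where "\<delta> = (LEAST d. d \<in> D)"
  have \<delta>min: "\<And>d. d \<in> D \<Longrightarrow> \<delta> \<le> d" unfolding \<delta>_def by (rule Least_le)
  have "\<delta> \<in> D" unfolding \<delta>_def by (rule LeastI) fact
  then obtain b where b: "b \<in> A" "b + \<delta> \<in> A" "0 < \<delta>" unfolding D_def by auto
  have "\<delta> dvd a" if a: "a \<in> A" for a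
  proof (rule ccontr)
    assume nd: "\<not> \<delta> dvd a"
    define q r where "q = a div \<delta>" "r = a mod \<delta>"
    have r: "0 < r" "r < \<delta>" using nd b(3) unfolding q_r_def
      by (auto simp: mod_greater_zero_iff_not_dvd)
    have X: "a + (q + 1) * b \<in> A"
      using add[OF a add_closed_mult_mem[OF add b(1), of "q + 1"]] by simp
    have Y: "(if q = 0 then b else q * (b + \<delta>) + b) \<in> A"
      using b(1) add[OF add_closed_mult_mem[OF add b(2), of q] b(1)] by auto
    have "a = q * \<delta> + r" unfolding q_r_def by simp
    then have "a + (q + 1) * b = (if q = 0 then b else q * (b + \<delta>) + b) + r"
      by (auto simp: algebra_simps)
    then have "r \<in> D" using X Y r unfolding D_def by auto
    then show False using \<delta>min r by fastforce
  qed
  then have "\<delta> dvd Gcd A" by (intro Gcd_greatest) auto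
  then show ?thesis using that b g by simp
qed

lemma add_closed_consecutive_ge:
  fixes A :: "nat set"
  assumes add: "\<And>a b. a \<in> A \<Longrightarrow> b \<in> A \<Longrightarrow> a + b \<in> A"
    and b: "b \<in> A" "b + 1 \<in> A" "0 < b" and t: "b * b \<le> t"
  shows "t \<in> A"
proof -
  define q r where "q = t div b" "r = t mod b"
  have teq: "t = q * b + r" and rb: "r < b" unfolding q_r_def using b(3) by simp_all
  have qb: "b \<le> q"
  proof (rule ccontr)
    assume "\<not> b \<le> q"
    then have "(q + 1) * b \<le> b * b" by (intro mult_le_mono1) simp
    then show False using teq rb t by (simp add: algebra_simps)
  qed
  have t2: "t = (q - r) * b + r * (b + 1)"
    using teq qb rb by (simp add: algebra_simps diff_mult_distrib)
  have m1: "(q - r) * b \<in> A" using add_closed_mult_mem[OF add b(1), of "q - r"] qb rb by simp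
  show ?thesis
  proof (cases "r = 0")
    case True
    then show ?thesis using m1 t2 by simp
  next
    case False
    then have "r * (b + 1) \<in> A" using add_closed_mult_mem[OF add b(2), of r] by simp
    then show ?thesis using add[OF m1] t2 by simp
  qed
qed

lemma add_closed_Gcd_eq_1_cofinite:
  fixes A :: "nat set"
  assumes add: "\<And>a b. a \<in> A \<Longrightarrow> b \<in> A \<Longrightarrow> a + b \<in> A"
    and nz: "0 \<notin> A" and ne: "A \<noteq> {}" and g: "Gcd A = 1"
  obtains t0 where "\<And>t. t0 \<le> t \<Longrightarrow> t \<in> A"
proof -
  obtain b where b: "b \<in> A" "b + 1 \<in> A"
    using add_closed_Gcd_eq_1_consecutive[OF add nz ne g] .
  then have "0 < b" using nz by (cases b) auto
  then show ?thesis using that add_closed_consecutive_ge[OF add b] by blast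
qed

lemma relpow_trans: "(a, b) \<in> R ^^ m \<Longrightarrow> (b, c) \<in> R ^^ k \<Longrightarrow> (a, c) \<in> R ^^ (m + k)"
  by (auto simp: relpow_add)

text \<open>Every closed walk yields, through \<open>r\<close>, two return times to \<open>r\<close> whose difference
  is its length.\<close>

lemma irreducible_aperiodic_return_times_Gcd:
  assumes irr: "irreducible_mat W" and ap: "aperiodic_mat W"
  shows "Gcd {m. 0 < m \<and> (r, r) \<in> edges W ^^ m} = 1"
proof -
  define L where "L = {m. 0 < m \<and> (\<exists>i. (i, i) \<in> edges W ^^ m)}"
  define R where "R = {m. 0 < m \<and> (r, r) \<in> edges W ^^ m}"
  have "Gcd R dvd m" if "m \<in> L" for m
  proof -
    obtain i where i: "0 < m" "(i, i) \<in> edges W ^^ m" using \<open>m \<in> L\<close> unfolding L_def by auto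
    obtain p q where p: "(r, i) \<in> edges W ^^ p" and q: "(i, r) \<in> edges W ^^ q"
      using irreducible_relpow[OF irr] by metis
    have "(r, r) \<in> edges W ^^ (p + q + m)"
      using relpow_trans[OF relpow_trans[OF p i(2)] q] by (simp add: add_ac)
    then have pqm: "Gcd R dvd p + q + m" using i(1) unfolding R_def by (intro Gcd_dvd) auto
    show ?thesis
    proof (cases "p + q = 0")
      case True
      then show ?thesis using pqm by simp
    next
      case False
      then have "p + q \<in> R" using relpow_trans[OF p q] unfolding R_def by auto
      then show ?thesis using pqm by (simp add: Gcd_dvd dvd_add_right_iff)
    qed
  qed
  then have "Gcd R dvd Gcd L" by (intro Gcd_greatest) auto
  then show ?thesis using ap unfolding aperiodic_mat_def L_def R_def by simp
qed

lemma irreducible_aperiodic_relpow_column: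
  assumes irr: "irreducible_mat W" and ap: "aperiodic_mat W"
  obtains M where "\<And>j. (j, r) \<in> edges W ^^ M"
proof -
  define R where "R = {m. 0 < m \<and> (r, r) \<in> edges W ^^ m}"
  have add: "a + b \<in> R" if "a \<in> R" "b \<in> R" for a b
    using that relpow_trans[of r r a "edges W" r b] unfolding R_def by auto
  have g: "Gcd R = 1"
    unfolding R_def by (rule irreducible_aperiodic_return_times_Gcd[OF irr ap])
  then have "R \<noteq> {}" by (intro notI) simp
  moreover have "0 \<notin> R" unfolding R_def by simp
  ultimately obtain t0 where t0: "\<And>t. t0 \<le> t \<Longrightarrow> t \<in> R"
    using add_closed_Gcd_eq_1_cofinite[OF add _ _ g] by blast
  have "\<forall>j. \<exists>m. (j, r) \<in> edges W ^^ m" using irreducible_relpow[OF irr] by blast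
  then obtain d where d: "\<And>j. (j, r) \<in> edges W ^^ d j" by metis
  define M where "M = t0 + Max (range d)"
  have "(j, r) \<in> edges W ^^ M" for j
  proof -
    have dj: "d j \<le> Max (range d)" by (rule Max_ge) auto
    then have "M - d j \<in> R" using t0[of "M - d j"] unfolding M_def by linarith
    then have "(r, r) \<in> edges W ^^ (M - d j)" unfolding R_def by auto
    from relpow_trans[OF d[of j] this] show ?thesis using dj unfolding M_def by simp
  qed
  then show ?thesis using that by blast
qed

lemma irreducible_aperiodic_matpow_column_ge:
  assumes W: "row_stochastic W" and irr: "irreducible_mat W" and ap: "aperiodic_mat W"
  obtains M \<delta> where "0 < \<delta>" "\<And>j. \<delta> \<le> matpow W M $ j $ r"
proof -
  obtain M where M: "\<And>j. (j, r) \<in> edges W ^^ M"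
    using irreducible_aperiodic_relpow_column[OF irr ap] by blast
  define \<delta> where "\<delta> = Min (range (\<lambda>j. matpow W M $ j $ r))"
  have "\<delta> \<in> range (\<lambda>j. matpow W M $ j $ r)" unfolding \<delta>_def by (rule Min_in) auto
  then have "0 < \<delta>" using M relpow_edges_iff_matpow_pos[OF W] by auto
  moreover have "\<delta> \<le> matpow W M $ j $ r" for j unfolding \<delta>_def by (rule Min_le) auto
  ultimately show ?thesis using that by blast
qed

section \<open>Convergence of matrix powers\<close>

lemma decseq_tendsto_0_geometric:
  fixes a :: "nat \<Rightarrow> real"
  assumes dec: "decseq a" and nonneg: "\<And>t. 0 \<le> a t" and geom: "\<And>k. a (k * M) \<le> c ^ k"
    and c: "0 \<le> c" "c < 1"
  shows "a \<longlonglongrightarrow> 0"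
proof -
  obtain U where U: "a \<longlonglongrightarrow> U" "\<And>t. U \<le> a t"
    using decseq_convergent[OF dec, of 0] nonneg by blast
  have "U \<le> c ^ k" for k using U(2)[of "k * M"] geom[of k] by linarith
  then have "U \<le> 0"
    using LIMSEQ_power_zero[of c] c by (intro LIMSEQ_le_const[of "\<lambda>k. c ^ k"]) auto
  moreover have "0 \<le> U" using U(1) nonneg by (intro LIMSEQ_le_const[of a]) auto
  ultimately show ?thesis using U(1) by simp
qed

lemma convex_sum_le:
  fixes x f :: "'n::finite \<Rightarrow> real"
  assumes x: "\<And>p. 0 \<le> x p" "sum x UNIV = 1" and r: "\<delta> \<le> x r" and f: "\<And>p. f p \<le> a"
  shows "(\<Sum>p\<in>UNIV. x p * f p) \<le> a + \<delta> * (f r - a)"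
proof -
  have "(\<Sum>p\<in>UNIV. x p * (f p - a)) = (\<Sum>p\<in>UNIV. x p * f p) - a * sum x UNIV"
    by (simp add: algebra_simps sum_subtractf sum_distrib_left)
  then have "(\<Sum>p\<in>UNIV. x p * f p) = (\<Sum>p\<in>UNIV. x p * (f p - a)) + a"
    using x(2) by simp
  also have "(\<Sum>p\<in>UNIV. x p * (f p - a)) = x r * (f r - a) + (\<Sum>p\<in>UNIV - {r}. x p * (f p - a))"
    by (simp add: sum.remove)
  also have "(\<Sum>p\<in>UNIV - {r}. x p * (f p - a)) \<le> 0"
    by (intro sum_nonpos) (simp add: mult_nonneg_nonpos x f)
  also have "x r * (f r - a) \<le> \<delta> * (f r - a)"
    using r f[of r] by (simp add: mult_right_mono_neg)
  finally show ?thesis by simp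
qed

lemma convex_sum_ge:
  fixes x f :: "'n::finite \<Rightarrow> real"
  assumes x: "\<And>p. 0 \<le> x p" "sum x UNIV = 1" and r: "\<delta> \<le> x r" and f: "\<And>p. b \<le> f p"
  shows "b + \<delta> * (f r - b) \<le> (\<Sum>p\<in>UNIV. x p * f p)"
proof -
  have "(\<Sum>p\<in>UNIV. x p * (- f p)) \<le> - b + \<delta> * (- f r - - b)"
    by (rule convex_sum_le[OF x r]) (use f in auto)
  then show ?thesis by (simp add: sum_negf algebra_simps)
qed

definition col_max :: "real^'n^'n \<Rightarrow> 'n \<Rightarrow> real" where
  "col_max A l = Max (range (\<lambda>j. A $ j $ l))"

definition col_min :: "real^'n^'n \<Rightarrow> 'n \<Rightarrow> real" where
  "col_min A l = Min (range (\<lambda>j. A $ j $ l))"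

lemma nth_le_col_max: "A $ j $ l \<le> col_max A l"
  unfolding col_max_def by (rule Max_ge) auto

lemma col_min_le_nth: "col_min A l \<le> A $ j $ l"
  unfolding col_min_def by (rule Min_le) auto

lemma col_max_attained: obtains j where "col_max A l = A $ j $ l"
proof -
  have "col_max A l \<in> range (\<lambda>j. A $ j $ l)" unfolding col_max_def by (rule Max_in) auto
  then show ?thesis using that by auto
qed

lemma col_min_attained: obtains j where "col_min A l = A $ j $ l"
proof -
  have "col_min A l \<in> range (\<lambda>j. A $ j $ l)" unfolding col_min_def by (rule Min_in) auto
  then show ?thesis using that by auto
qed

lemma row_stochastic_col_max_minus_col_min:
  assumes "row_stochastic A"
  shows "col_max A l - col_min A l \<le> 1"
proof -
  obtain j where "col_max A l = A $ j $ l" by (rule col_max_attained)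
  moreover obtain j' where "col_min A l = A $ j' $ l" by (rule col_min_attained)
  ultimately show ?thesis
    using row_stochastic_le_1[OF assms, of j l] row_stochastic_nonneg[OF assms, of j' l] by simp
qed

lemma col_max_mult_le:
  assumes W: "row_stochastic W" and r: "\<And>j. \<delta> \<le> W $ j $ r"
  shows "col_max (W ** A) l \<le> col_max A l + \<delta> * (A $ r $ l - col_max A l)"
proof -
  obtain j where "col_max (W ** A) l = (W ** A) $ j $ l" by (rule col_max_attained)
  also have "\<dots> = (\<Sum>p\<in>UNIV. W $ j $ p * A $ p $ l)" by (rule matrix_mult_nth)
  also have "\<dots> \<le> col_max A l + \<delta> * (A $ r $ l - col_max A l)"
    using W r by (intro convex_sum_le nth_le_col_max row_stochastic_nonneg row_stochastic_row_sum)
  finally show ?thesis .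
qed

lemma col_min_mult_ge:
  assumes W: "row_stochastic W" and r: "\<And>j. \<delta> \<le> W $ j $ r"
  shows "col_min A l + \<delta> * (A $ r $ l - col_min A l) \<le> col_min (W ** A) l"
proof -
  obtain j where "col_min (W ** A) l = (W ** A) $ j $ l" by (rule col_min_attained)
  then have "col_min (W ** A) l = (\<Sum>p\<in>UNIV. W $ j $ p * A $ p $ l)" by (simp add: matrix_mult_nth)
  moreover have "col_min A l + \<delta> * (A $ r $ l - col_min A l) \<le> (\<Sum>p\<in>UNIV. W $ j $ p * A $ p $ l)"
    using W r by (intro convex_sum_ge col_min_le_nth row_stochastic_nonneg row_stochastic_row_sum)
  ultimately show ?thesis by simp
qed

text \<open>Doeblin's argument: if some column of \<open>W\<^sup>M\<close> is bounded below by \<open>\<delta>\<close>, multiplication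
  by \<open>W\<^sup>M\<close> shrinks the oscillation of every column by the factor \<open>1 - \<delta>\<close>.\<close>

lemma doeblin_col_oscillation:
  assumes W: "row_stochastic W" and col: "\<And>j. \<delta> \<le> matpow W M $ j $ r"
  shows "col_max (matpow W (k * M)) l - col_min (matpow W (k * M)) l \<le> (1 - \<delta>) ^ k"
proof (induction k)
  case 0
  show ?case using row_stochastic_col_max_minus_col_min[OF row_stochastic_mat_1, of l] by simp
next
  case (Suc k)
  define A where "A = matpow W (k * M)"
  have WM: "row_stochastic (matpow W M)" by (rule row_stochastic_matpow[OF W])
  have \<delta>1: "\<delta> \<le> 1" using col[of r] row_stochastic_le_1[OF WM, of r r] by simp
  have "matpow W (Suc k * M) = matpow W M ** A"
    unfolding A_def by (simp add: matpow_add[symmetric])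
  then have "col_max (matpow W (Suc k * M)) l - col_min (matpow W (Suc k * M)) l
      \<le> (1 - \<delta>) * (col_max A l - col_min A l)"
    using col_max_mult_le[OF WM col, of A l] col_min_mult_ge[OF WM col, of A l]
    by (simp add: algebra_simps)
  also have "\<dots> \<le> (1 - \<delta>) * (1 - \<delta>) ^ k"
    using Suc.IH \<delta>1 unfolding A_def by (intro mult_left_mono) auto
  finally show ?case by simp
qed

lemma doeblin_col_convergent:
  assumes W: "row_stochastic W" and \<delta>: "0 < \<delta>" and col: "\<And>j. \<delta> \<le> matpow W M $ j $ r"
  obtains c where "\<And>j. (\<lambda>t. matpow W t $ j $ l) \<longlonglongrightarrow> c"
proof -
  define a where "a t = col_max (matpow W t) l" for t
  define b where "b t = col_min (matpow W t) l" for t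
  have Wt: "row_stochastic (matpow W t)" for t by (rule row_stochastic_matpow[OF W])
  have ab: "b t \<le> matpow W t $ j $ l" "matpow W t $ j $ l \<le> a t" for t j
    unfolding a_def b_def by (rule col_min_le_nth, rule nth_le_col_max)
  have adec: "decseq a"
  proof (rule decseq_SucI)
    show "a (Suc t) \<le> a t" for t
      using col_max_mult_le[OF W row_stochastic_nonneg[OF W], of "matpow W t" l]
      by (simp add: a_def matpow_Suc_left del: matpow.simps)
  qed
  have binc: "incseq b"
  proof (rule incseq_SucI)
    show "b t \<le> b (Suc t)" for t
      using col_min_mult_ge[OF W row_stochastic_nonneg[OF W], of "matpow W t" l]
      by (simp add: b_def matpow_Suc_left del: matpow.simps)
  qed
  have osc_lim: "(\<lambda>t. a t - b t) \<longlonglongrightarrow> 0"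
  proof (rule decseq_tendsto_0_geometric)
    show "decseq (\<lambda>t. a t - b t)"
      using adec binc unfolding decseq_def incseq_def by (simp add: diff_mono)
    show "0 \<le> a t - b t" for t using ab[of t r] by simp
    show "a (k * M) - b (k * M) \<le> (1 - \<delta>) ^ k" for k
      unfolding a_def b_def by (rule doeblin_col_oscillation[OF W col])
    show "1 - \<delta> < 1" "0 \<le> 1 - \<delta>"
      using \<delta> col[of r] row_stochastic_le_1[OF Wt, of M r r] by auto
  qed
  have "\<forall>t. 0 \<le> a t" using order_trans[OF row_stochastic_nonneg[OF Wt] ab(2)] by blast
  then obtain c where a: "a \<longlonglongrightarrow> c" using decseq_convergent[OF adec] by blast
  have b: "b \<longlonglongrightarrow> c" using tendsto_diff[OF a osc_lim] by simp
  have "(\<lambda>t. matpow W t $ j $ l) \<longlonglongrightarrow> c" for j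
    by (rule tendsto_sandwich[OF _ _ b a]) (auto intro!: always_eventually ab)
  then show ?thesis using that by blast
qed

lemma doeblin_matpow_convergent:
  assumes W: "row_stochastic W" and \<delta>: "0 < \<delta>" and col: "\<And>j. \<delta> \<le> matpow W M $ j $ r"
  shows "\<exists>\<pi>. \<forall>j l. (\<lambda>t. matpow W t $ j $ l) \<longlonglongrightarrow> \<pi> $ l"
proof -
  have "\<forall>l. \<exists>c. \<forall>j. (\<lambda>t. matpow W t $ j $ l) \<longlonglongrightarrow> c"
    using doeblin_col_convergent[OF W \<delta> col] by metis
  then obtain c where "\<And>l j. (\<lambda>t. matpow W t $ j $ l) \<longlonglongrightarrow> c l" by metis
  then show ?thesis by (intro exI[of _ "\<chi> l. c l"]) simp
qed

lemma irreducible_aperiodic_matpow_convergent: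
  assumes "row_stochastic W" "irreducible_mat W" "aperiodic_mat W"
  shows "\<exists>\<pi>. \<forall>j l. (\<lambda>t. matpow W t $ j $ l) \<longlonglongrightarrow> \<pi> $ l"
proof -
  obtain M \<delta> where "0 < \<delta>" "\<And>j. \<delta> \<le> matpow W M $ j $ undefined"
    using irreducible_aperiodic_matpow_column_ge[OF assms, where r=undefined] by blast
  then show ?thesis by (rule doeblin_matpow_convergent[OF assms(1)])
qed

lemma absorbing_row:
  assumes W: "row_stochastic W" and k: "W $ k $ k = 1"
  shows "W $ k $ l = (if l = k then 1 else 0)"
proof -
  have "(\<Sum>l\<in>UNIV. W $ k $ l) = W $ k $ k + (\<Sum>l\<in>UNIV - {k}. W $ k $ l)"
    by (simp add: sum.remove)
  then have "(\<Sum>l\<in>UNIV - {k}. W $ k $ l) = 0" using row_stochastic_row_sum[OF W] k by simp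
  then have "\<forall>l\<in>UNIV - {k}. W $ k $ l = 0"
    using sum_nonneg_eq_0_iff[of "UNIV - {k}" "\<lambda>l. W $ k $ l"] row_stochastic_nonneg[OF W] by auto
  then show ?thesis using k by auto
qed

lemma absorbing_matpow_row:
  assumes W: "row_stochastic W" and k: "W $ k $ k = 1"
  shows "matpow W t $ k $ l = (if l = k then 1 else 0)"
proof (induction t arbitrary: l)
  case 0
  then show ?case by (simp add: mat_1_nth)
next
  case (Suc t)
  have "matpow W (Suc t) $ k $ l = (\<Sum>q\<in>UNIV. (if q = k then 1 else 0) * W $ q $ l)"
    by (simp add: matrix_mult_nth Suc.IH)
  also have "\<dots> = W $ k $ l"
    by (simp add: if_distrib[of "\<lambda>x. x * _"] cong: if_cong)
  finally show ?case using absorbing_row[OF W k] by simp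
qed

lemma absorbing_matpow_incseq:
  assumes W: "row_stochastic W" and l: "W $ l $ l = 1"
  shows "incseq (\<lambda>t. matpow W t $ j $ l)"
proof (rule incseq_SucI)
  show "matpow W t $ j $ l \<le> matpow W (Suc t) $ j $ l" for t
    using row_stochastic_mult_ge[OF row_stochastic_matpow[OF W] W, where i=j and k=l and j=l] l
    by simp
qed

context
  fixes W :: "real^'n^'n" and S :: "'n set"
  assumes W: "row_stochastic W" and absorbing: "\<And>k. k \<in> S \<Longrightarrow> W $ k $ k = 1"
    and reach: "\<And>j. \<exists>k\<in>S. \<exists>m. 0 < matpow W m $ j $ k"
begin

lemma absorbing_mass_ge:
  obtains M \<delta> where "0 < \<delta>" "\<And>j. \<delta> \<le> (\<Sum>l\<in>S. matpow W M $ j $ l)"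
proof -
  have Wt: "row_stochastic (matpow W t)" for t by (rule row_stochastic_matpow[OF W])
  obtain kk mm where kk: "\<And>j. kk j \<in> S" "\<And>j. 0 < matpow W (mm j) $ j $ kk j"
    using reach by metis
  define M where "M = Max (range mm)"
  have "0 < matpow W M $ j $ kk j" for j
  proof -
    have "mm j \<le> M" unfolding M_def by (rule Max_ge) auto
    then show ?thesis
      using kk(2)[of j] absorbing_matpow_incseq[OF W absorbing[OF kk(1)], of j]
      unfolding incseq_def by (meson less_le_trans)
  qed
  moreover define \<delta> where "\<delta> = Min (range (\<lambda>j. matpow W M $ j $ kk j))"
  moreover have "\<delta> \<in> range (\<lambda>j. matpow W M $ j $ kk j)" unfolding \<delta>_def by (rule Min_in) auto
  ultimately have "0 < \<delta>" by auto
  moreover have "\<delta> \<le> (\<Sum>l\<in>S. matpow W M $ j $ l)" for j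
  proof -
    have "\<delta> \<le> matpow W M $ j $ kk j" unfolding \<delta>_def by (rule Min_le) auto
    also have "\<dots> \<le> (\<Sum>l\<in>S. matpow W M $ j $ l)"
      by (rule member_le_sum) (auto intro: kk(1) row_stochastic_nonneg[OF Wt])
    finally show ?thesis .
  qed
  ultimately show ?thesis using that by blast
qed

lemma absorbing_escape_tendsto_0:
  "(\<lambda>t. \<Sum>l\<in>-S. matpow W t $ j $ l) \<longlonglongrightarrow> 0"
proof -
  have Wt: "row_stochastic (matpow W t)" for t by (rule row_stochastic_matpow[OF W])
  obtain M \<delta> where \<delta>: "0 < \<delta>" and mass: "\<And>j. \<delta> \<le> (\<Sum>l\<in>S. matpow W M $ j $ l)"
    using absorbing_mass_ge by blast
  define u where "u t j = (\<Sum>l\<in>-S. matpow W t $ j $ l)" for t j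
  have u_eq: "u t j = 1 - (\<Sum>l\<in>S. matpow W t $ j $ l)" for t j
    using sum.union_disjoint[of S "-S" "\<lambda>l. matpow W t $ j $ l"] row_stochastic_row_sum[OF Wt]
    unfolding u_def by (simp add: Un_commute)
  have u_nonneg: "0 \<le> u t j" for t j
    unfolding u_def by (intro sum_nonneg row_stochastic_nonneg[OF Wt])
  have u_absorbed: "u t p = 0" if "p \<in> S" for t p
    unfolding u_def using absorbing_matpow_row[OF W absorbing[OF that]] that by auto
  have u_add: "u (M + t) j = (\<Sum>p\<in>-S. matpow W M $ j $ p * u t p)" for t j
  proof -
    have "u (M + t) j = (\<Sum>p\<in>UNIV. matpow W M $ j $ p * u t p)"
      unfolding u_def matpow_add matrix_mult_nth
      by (subst sum.swap) (simp add: sum_distrib_left)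
    also have "\<dots> = (\<Sum>p\<in>-S. matpow W M $ j $ p * u t p)"
      using u_absorbed by (intro sum.mono_neutral_right) auto
    finally show ?thesis .
  qed
  have \<delta>1: "\<delta> \<le> 1" using mass[of undefined] u_eq[of M undefined] u_nonneg[of M undefined] by simp
  have u_geom: "u (k * M) j \<le> (1 - \<delta>) ^ k" for k j
  proof (induction k arbitrary: j)
    case 0
    have "0 \<le> (\<Sum>l\<in>S. matpow W 0 $ j $ l)" by (intro sum_nonneg row_stochastic_nonneg[OF Wt])
    then show ?case using u_eq[of 0 j] by simp
  next
    case (Suc k)
    have "u (Suc k * M) j \<le> (\<Sum>p\<in>-S. matpow W M $ j $ p * (1 - \<delta>) ^ k)"
      using u_add[of "k * M" j] Suc.IH
      by (simp add: add.commute) (intro sum_mono mult_left_mono row_stochastic_nonneg[OF Wt])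
    also have "\<dots> = u M j * (1 - \<delta>) ^ k" unfolding u_def by (simp add: sum_distrib_right)
    also have "\<dots> \<le> (1 - \<delta>) * (1 - \<delta>) ^ k"
      using mass[of j] \<delta>1 u_eq[of M j] by (intro mult_right_mono) auto
    finally show ?case by simp
  qed
  have "decseq (\<lambda>t. u t j)"
    using absorbing_matpow_incseq[OF W absorbing] unfolding decseq_def incseq_def u_eq
    by (auto intro!: sum_mono)
  from decseq_tendsto_0_geometric[OF this u_nonneg u_geom] show ?thesis
    using \<delta> \<delta>1 unfolding u_def by simp
qed

lemma absorbing_matpow_convergent:
  "\<exists>L. (\<forall>j l. (\<lambda>t. matpow W t $ j $ l) \<longlonglongrightarrow> L $ j $ l) \<and>
    (\<forall>j l. l \<notin> S \<longrightarrow> L $ j $ l = 0)"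
proof -
  have Wt: "row_stochastic (matpow W t)" for t by (rule row_stochastic_matpow[OF W])
  have "(\<lambda>t. matpow W t $ j $ l) \<longlonglongrightarrow> 0" if "l \<notin> S" for j l
  proof (rule tendsto_sandwich[OF _ _ tendsto_const absorbing_escape_tendsto_0[of j]])
    show "\<forall>\<^sub>F t in sequentially. 0 \<le> matpow W t $ j $ l"
      by (intro always_eventually allI row_stochastic_nonneg[OF Wt])
    show "\<forall>\<^sub>F t in sequentially. matpow W t $ j $ l \<le> (\<Sum>l\<in>-S. matpow W t $ j $ l)"
      using that by (intro always_eventually allI member_le_sum) (auto intro: row_stochastic_nonneg[OF Wt])
  qed
  moreover have "\<exists>c. (\<lambda>t. matpow W t $ j $ l) \<longlonglongrightarrow> c" if "l \<in> S" for j l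
    using incseq_convergent[OF absorbing_matpow_incseq[OF W absorbing[OF that]], where B=1]
      row_stochastic_le_1[OF Wt] by metis
  ultimately have
    "\<forall>j l. \<exists>c. (\<lambda>t. matpow W t $ j $ l) \<longlonglongrightarrow> c \<and> (l \<notin> S \<longrightarrow> c = 0)"
    by blast
  then obtain c where
    "\<And>j l. (\<lambda>t. matpow W t $ j $ l) \<longlonglongrightarrow> c j l" "\<And>j l. l \<notin> S \<Longrightarrow> c j l = 0"
    by metis
  then show ?thesis by (intro exI[of _ "\<chi> j l. c j l"]) simp
qed

end

section \<open>Stationary vectors\<close>

lemma matpow_limit_fixed:
  assumes "\<And>j l. (\<lambda>t. matpow W t $ j $ l) \<longlonglongrightarrow> L $ j $ l"
  shows "L $ j $ l = (\<Sum>p\<in>UNIV. W $ j $ p * L $ p $ l)"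
proof -
  have "(\<lambda>t. matpow W (Suc t) $ j $ l) \<longlonglongrightarrow> (\<Sum>p\<in>UNIV. W $ j $ p * L $ p $ l)"
    unfolding matpow_Suc_left matrix_mult_nth by (intro tendsto_intros assms)
  moreover have "(\<lambda>t. matpow W (Suc t) $ j $ l) \<longlonglongrightarrow> L $ j $ l" by (rule LIMSEQ_Suc[OF assms])
  ultimately show ?thesis using LIMSEQ_unique by blast
qed

lemma row_stochastic_matpow_limit:
  assumes W: "row_stochastic W" and lim: "\<And>j l. (\<lambda>t. matpow W t $ j $ l) \<longlonglongrightarrow> L $ j $ l"
  shows "row_stochastic L"
proof -
  have "0 \<le> L $ j $ l" for j l
    by (rule LIMSEQ_le_const[OF lim]) (auto intro: row_stochastic_nonneg[OF row_stochastic_matpow[OF W]])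
  moreover have "(\<lambda>t. \<Sum>l\<in>UNIV. matpow W t $ j $ l) \<longlonglongrightarrow> (\<Sum>l\<in>UNIV. L $ j $ l)" for j
    by (intro tendsto_intros lim)
  then have "(\<Sum>l\<in>UNIV. L $ j $ l) = 1" for j
    using row_stochastic_row_sum[OF row_stochastic_matpow[OF W]] by (simp add: LIMSEQ_const_iff)
  ultimately show ?thesis unfolding row_stochastic_def by auto
qed

definition stationary :: "real^'n^'n \<Rightarrow> real^'n \<Rightarrow> bool" where
  "stationary W \<nu> \<longleftrightarrow> (\<forall>l. (\<Sum>j\<in>UNIV. \<nu> $ j * W $ j $ l) = \<nu> $ l)"

lemma stationary_matpow:
  assumes "stationary W \<nu>"
  shows "(\<Sum>j\<in>UNIV. \<nu> $ j * matpow W m $ j $ l) = \<nu> $ l"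
proof (induction m arbitrary: l)
  case 0
  then show ?case by (simp add: mat_1_nth if_distrib cong: if_cong)
next
  case (Suc m)
  have "(\<Sum>j\<in>UNIV. \<nu> $ j * matpow W (Suc m) $ j $ l)
      = (\<Sum>j\<in>UNIV. \<Sum>p\<in>UNIV. \<nu> $ j * (matpow W m $ j $ p * W $ p $ l))"
    by (simp add: matrix_mult_nth sum_distrib_left)
  also have "\<dots> = (\<Sum>p\<in>UNIV. (\<Sum>j\<in>UNIV. \<nu> $ j * matpow W m $ j $ p) * W $ p $ l)"
    by (subst sum.swap) (simp add: sum_distrib_right mult.assoc)
  also have "\<dots> = \<nu> $ l" using Suc.IH assms unfolding stationary_def by simp
  finally show ?case .
qed

lemma matpow_limit_row_stationary:
  assumes lim: "\<And>j l. (\<lambda>t. matpow W t $ j $ l) \<longlonglongrightarrow> \<pi> $ l"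
  shows "stationary W \<pi>"
  unfolding stationary_def
proof
  fix l
  have "(\<lambda>t. matpow W (Suc t) $ j $ l) \<longlonglongrightarrow> (\<Sum>p\<in>UNIV. \<pi> $ p * W $ p $ l)" for j
    unfolding matpow.simps matrix_mult_nth by (intro tendsto_intros lim)
  moreover have "(\<lambda>t. matpow W (Suc t) $ j $ l) \<longlonglongrightarrow> \<pi> $ l" for j by (rule LIMSEQ_Suc[OF lim])
  ultimately show "(\<Sum>p\<in>UNIV. \<pi> $ p * W $ p $ l) = \<pi> $ l" using LIMSEQ_unique by blast
qed

lemma stationary_eq_limit_row:
  assumes st: "stationary W \<nu>" and \<nu>1: "(\<Sum>j\<in>UNIV. \<nu> $ j) = 1"
    and lim: "\<And>j l. (\<lambda>t. matpow W t $ j $ l) \<longlonglongrightarrow> \<pi> $ l"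
  shows "\<nu> = \<pi>"
proof -
  have "\<nu> $ l = \<pi> $ l" for l
  proof -
    have "(\<lambda>t. \<Sum>j\<in>UNIV. \<nu> $ j * matpow W t $ j $ l) \<longlonglongrightarrow> (\<Sum>j\<in>UNIV. \<nu> $ j * \<pi> $ l)"
      by (intro tendsto_intros lim)
    then show ?thesis using \<nu>1 stationary_matpow[OF st]
      by (simp add: LIMSEQ_const_iff flip: sum_distrib_right)
  qed
  then show ?thesis by (simp add: vec_eq_iff)
qed

lemma irreducible_stationary_pos:
  assumes P: "row_stochastic P" and irr: "irreducible_mat P" and st: "stationary P \<pi>"
    and nonneg: "\<And>j. 0 \<le> \<pi> $ j" and j0: "0 < \<pi> $ j0"
  shows "0 < \<pi> $ l"
proof -
  obtain m where "(j0, l) \<in> edges P ^^ m" using irreducible_relpow[OF irr] by blast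
  then have "0 < \<pi> $ j0 * matpow P m $ j0 $ l" using j0 relpow_edges_iff_matpow_pos[OF P] by simp
  also have "\<dots> \<le> (\<Sum>j\<in>UNIV. \<pi> $ j * matpow P m $ j $ l)"
    by (rule member_le_sum[where f="\<lambda>j. \<pi> $ j * matpow P m $ j $ l"])
       (auto intro!: mult_nonneg_nonneg nonneg row_stochastic_nonneg[OF row_stochastic_matpow[OF P]])
  also have "\<dots> = \<pi> $ l" by (rule stationary_matpow[OF st])
  finally show ?thesis .
qed

lemma stationary_pos_exists:
  fixes P :: "real^'n^'n"
  assumes P: "row_stochastic P" and irr: "irreducible_mat P" and ap: "aperiodic_mat P"
  obtains \<pi> where "stationary P \<pi>" "\<And>j. 0 < \<pi> $ j"
proof -
  obtain \<pi> where lim: "\<And>j l. (\<lambda>t. matpow P t $ j $ l) \<longlonglongrightarrow> \<pi> $ l"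
    using irreducible_aperiodic_matpow_convergent[OF P irr ap] by blast
  have limL: "\<And>j l. (\<lambda>t. matpow P t $ j $ l) \<longlonglongrightarrow> (\<chi> j l. \<pi> $ l) $ j $ l" using lim by simp
  have st: "stationary P \<pi>" by (rule matpow_limit_row_stationary[OF lim])
  have L: "row_stochastic (\<chi> j l. \<pi> $ l :: real^'n^'n)"
    by (rule row_stochastic_matpow_limit[OF P limL])
  then have nonneg: "0 \<le> \<pi> $ j" for j using row_stochastic_nonneg[OF L, of undefined j] by simp
  have "\<exists>j0. 0 < \<pi> $ j0"
  proof (rule ccontr)
    assume "\<not> ?thesis"
    then have "(\<Sum>j\<in>UNIV. \<pi> $ j) \<le> 0" by (intro sum_nonpos) (simp add: not_less)
    then show False using row_stochastic_row_sum[OF L, of undefined] by simp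
  qed
  then show ?thesis using that st irreducible_stationary_pos[OF P irr st nonneg] by blast
qed

lemma stationary_scaleR: "stationary W \<nu> \<Longrightarrow> stationary W (c *\<^sub>R \<nu>)"
  unfolding stationary_def by (simp add: mult.assoc flip: sum_distrib_left)

section \<open>The matrices \<open>W(z)\<close> and \<open>H(z)\<close>\<close>

lemma Wmat_nth: "Wmat P z $ i $ j = (1 - z $ i) * P $ i $ j + (if i = j then z $ i else 0)"
proof -
  have "((mat 1 - diagm z) ** P) $ i $ j = (\<Sum>k\<in>UNIV. if k = i then (1 - z $ i) * P $ k $ j else 0)"
    unfolding matrix_mult_nth by (intro sum.cong) (auto simp: diagm_def mat_1_nth)
  then show ?thesis unfolding Wmat_def by (simp add: diagm_def)
qed

lemma row_stochastic_Wmat: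
  assumes P: "row_stochastic P" and z: "z \<in> cbox 0 1"
  shows "row_stochastic (Wmat P z)"
proof -
  have "(\<Sum>j\<in>UNIV. Wmat P z $ i $ j) = (1 - z $ i) * (\<Sum>j\<in>UNIV. P $ i $ j) + z $ i" for i
    unfolding Wmat_nth by (simp add: sum.distrib sum_distrib_left)
  then show ?thesis
    using z row_stochastic_nonneg[OF P] row_stochastic_row_sum[OF P]
    unfolding row_stochastic_def Wmat_nth mem_box_cart by auto
qed

lemma edge_Wmat:
  assumes z: "z \<in> cbox 0 1" and i: "z $ i < 1" and e: "(i, j) \<in> edges P"
  shows "(i, j) \<in> edges (Wmat P z)"
proof -
  have "0 < (1 - z $ i) * P $ i $ j" using i e by (simp add: edges_def)
  moreover have "0 \<le> (if i = j then z $ i else 0)" using z by (simp add: mem_box_cart)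
  ultimately show ?thesis unfolding edges_def Wmat_nth by auto
qed

lemma relpow_mono: "(R :: 'a rel) \<subseteq> R' \<Longrightarrow> R ^^ n \<subseteq> R' ^^ n"
  by (induction n) (simp_all add: relcomp_mono)

lemma
  assumes irr: "irreducible_mat P" and ap: "aperiodic_mat P"
    and z: "z \<in> cbox 0 1" and no_stubborn: "\<And>i. z $ i < 1"
  shows irreducible_Wmat: "irreducible_mat (Wmat P z)"
    and aperiodic_Wmat: "aperiodic_mat (Wmat P z)"
proof -
  have sub: "edges P \<subseteq> edges (Wmat P z)" using edge_Wmat[OF z no_stubborn] by auto
  show "irreducible_mat (Wmat P z)"
    using irr rtrancl_mono[OF sub] unfolding irreducible_mat_def by blast
  define LP where "LP = {m. 0 < m \<and> (\<exists>i. (i, i) \<in> edges P ^^ m)}"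
  define LW where "LW = {m. 0 < m \<and> (\<exists>i. (i, i) \<in> edges (Wmat P z) ^^ m)}"
  have "LP \<subseteq> LW" unfolding LP_def LW_def using relpow_mono[OF sub] by blast
  then have "Gcd LW dvd Gcd LP" by (intro Gcd_greatest Gcd_dvd) auto
  then show "aperiodic_mat (Wmat P z)" using ap unfolding aperiodic_mat_def LP_def LW_def by simp
qed

lemma Hmat_eqI:
  assumes "\<And>j l. (\<lambda>t. matpow (Wmat P z) t $ j $ l) \<longlonglongrightarrow> L $ j $ l"
  shows "Hmat P z = L"
  unfolding Hmat_def by (intro limI vec_tendstoI) (use assms in simp)

text \<open>Rescaling by the expected holding times \<open>1 / (1 - z\<^sub>l)\<close> turns a stationary vector
  of \<open>P\<close> into one of \<open>W(z)\<close>.\<close>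

lemma stationary_Wmat:
  assumes st: "stationary P \<mu>" and no_stubborn: "\<And>i. z $ i < 1"
  shows "stationary (Wmat P z) (\<chi> l. \<mu> $ l / (1 - z $ l))"
  unfolding stationary_def
proof
  fix l
  have nz: "z $ j \<noteq> 1" for j using no_stubborn[of j] by simp
  have "(\<Sum>j\<in>UNIV. (\<chi> l. \<mu> $ l / (1 - z $ l)) $ j * Wmat P z $ j $ l)
      = (\<Sum>j\<in>UNIV. \<mu> $ j * P $ j $ l + (if j = l then \<mu> $ j / (1 - z $ j) * z $ j else 0))"
    unfolding Wmat_nth by (intro sum.cong) (auto simp: field_simps nz)
  also have "\<dots> = \<mu> $ l + \<mu> $ l / (1 - z $ l) * z $ l"
    using st unfolding stationary_def by (simp add: sum.distrib)
  also have "\<dots> = (\<chi> l. \<mu> $ l / (1 - z $ l)) $ l"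
    using no_stubborn[of l] by (simp add: field_simps)
  finally show "(\<Sum>j\<in>UNIV. (\<chi> l. \<mu> $ l / (1 - z $ l)) $ j * Wmat P z $ j $ l)
      = (\<chi> l. \<mu> $ l / (1 - z $ l)) $ l" .
qed

lemma Hmat_no_stubborn:
  fixes P :: "real^'n^'n"
  assumes P: "row_stochastic P" and irr: "irreducible_mat P" and ap: "aperiodic_mat P"
    and st: "stationary P \<mu>" and \<mu>: "\<And>j. 0 < \<mu> $ j"
    and z: "z \<in> cbox 0 1" and no_stubborn: "\<And>i. z $ i < 1"
  shows "Hmat P z $ j $ l = (\<mu> $ l / (1 - z $ l)) / (\<Sum>k\<in>UNIV. \<mu> $ k / (1 - z $ k))"
proof -
  define N where "N = (\<Sum>k\<in>UNIV. \<mu> $ k / (1 - z $ k))"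
  define \<nu> where "\<nu> = (\<chi> l. (\<mu> $ l / (1 - z $ l)) / N)"
  have "(\<Sum>l\<in>UNIV. \<nu> $ l) = (\<Sum>l\<in>UNIV. \<mu> $ l / (1 - z $ l)) / N"
    unfolding \<nu>_def by (simp only: vec_lambda_beta sum_divide_distrib)
  moreover have "0 < N" unfolding N_def using \<mu> no_stubborn by (intro sum_pos) auto
  ultimately have \<nu>1: "(\<Sum>l\<in>UNIV. \<nu> $ l) = 1" unfolding N_def by simp
  have "\<nu> = (1 / N) *\<^sub>R (\<chi> l. \<mu> $ l / (1 - z $ l))" unfolding \<nu>_def by (simp add: vec_eq_iff)
  then have st_\<nu>: "stationary (Wmat P z) \<nu>" using stationary_scaleR[OF stationary_Wmat[OF st no_stubborn]] by simp
  obtain \<pi> where lim: "\<And>j l. (\<lambda>t. matpow (Wmat P z) t $ j $ l) \<longlonglongrightarrow> \<pi> $ l"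
    using irreducible_aperiodic_matpow_convergent[OF row_stochastic_Wmat[OF P z]
        irreducible_Wmat[OF irr ap z no_stubborn] aperiodic_Wmat[OF irr ap z no_stubborn]] by blast
  have "\<nu> = \<pi>" by (rule stationary_eq_limit_row[OF st_\<nu> \<nu>1 lim])
  then have "Hmat P z = (\<chi> j l. \<nu> $ l)" using lim by (intro Hmat_eqI) simp
  then show ?thesis unfolding \<nu>_def N_def by simp
qed

lemma reach_stubborn:
  assumes irr: "irreducible_mat P" and z: "z \<in> cbox 0 1" and s: "z $ s = 1"
  shows "\<exists>k. z $ k = 1 \<and> (j, k) \<in> (edges (Wmat P z))\<^sup>*"
proof -
  have "(j, s) \<in> (edges P)\<^sup>*" using irr unfolding irreducible_mat_def by blast
  then show ?thesis
  proof (induction rule: converse_rtrancl_induct)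
    case base
    then show ?case using s by blast
  next
    case (step y y')
    show ?case
    proof (cases "z $ y = 1")
      case False
      then have "z $ y < 1" using z by (simp add: mem_box_cart less_le)
      then have "(y, y') \<in> edges (Wmat P z)" using edge_Wmat[OF z _ step(1)] by blast
      then show ?thesis using step(3) by (meson converse_rtrancl_into_rtrancl)
    qed blast
  qed
qed

lemma
  fixes P :: "real^'n^'n"
  assumes P: "row_stochastic P" and irr: "irreducible_mat P" and z: "z \<in> cbox 0 1"
    and s: "z $ s = 1"
  shows Wmat_matpow_tendsto_Hmat: "(\<lambda>t. matpow (Wmat P z) t $ j $ l) \<longlonglongrightarrow> Hmat P z $ j $ l"
    and Hmat_nonstubborn_col: "z $ l \<noteq> 1 \<Longrightarrow> Hmat P z $ j $ l = 0"
proof -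
  have W: "row_stochastic (Wmat P z)" by (rule row_stochastic_Wmat[OF P z])
  have absorbing: "Wmat P z $ k $ k = 1" if "k \<in> {k. z $ k = 1}" for k
    using that unfolding Wmat_nth by simp
  have "\<exists>k\<in>{k. z $ k = 1}. \<exists>m. 0 < matpow (Wmat P z) m $ j $ k" for j
    using reach_stubborn[OF irr z s, of j] relpow_edges_iff_matpow_pos[OF W]
    by (metis mem_Collect_eq rtrancl_power)
  then obtain L where "\<forall>j l. (\<lambda>t. matpow (Wmat P z) t $ j $ l) \<longlonglongrightarrow> L $ j $ l"
      "\<forall>j l. l \<notin> {k. z $ k = 1} \<longrightarrow> L $ j $ l = 0"
    using absorbing_matpow_convergent[OF W absorbing] by blast
  moreover from this have "Hmat P z = L" by (intro Hmat_eqI) blast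
  ultimately show "(\<lambda>t. matpow (Wmat P z) t $ j $ l) \<longlonglongrightarrow> Hmat P z $ j $ l"
    and "z $ l \<noteq> 1 \<Longrightarrow> Hmat P z $ j $ l = 0" by auto
qed

lemma
  fixes P :: "real^'n^'n"
  assumes P: "row_stochastic P" and irr: "irreducible_mat P" and z: "z \<in> cbox 0 1"
    and s: "z $ s = 1"
  shows row_stochastic_Hmat: "row_stochastic (Hmat P z)"
    and Hmat_stubborn_row: "z $ k = 1 \<Longrightarrow> Hmat P z $ k $ l = (if l = k then 1 else 0)"
proof -
  have W: "row_stochastic (Wmat P z)" by (rule row_stochastic_Wmat[OF P z])
  note lim = Wmat_matpow_tendsto_Hmat[OF P irr z s]
  show "row_stochastic (Hmat P z)" by (rule row_stochastic_matpow_limit[OF W lim])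
  assume "z $ k = 1"
  then have "(\<lambda>t. matpow (Wmat P z) t $ k $ l) \<longlonglongrightarrow> (if l = k then 1 else 0)"
    using absorbing_matpow_row[OF W, of k] by (simp add: Wmat_nth)
  then show "Hmat P z $ k $ l = (if l = k then 1 else 0)" using lim LIMSEQ_unique by blast
qed

text \<open>Maximum principle: the maximum of \<open>f\<close> propagates along the edges leaving vertices
  outside \<open>S\<close>, so by irreducibility it is attained on \<open>S\<close>.\<close>

lemma irreducible_harmonic_le_0:
  fixes P :: "real^'n^'n" and f :: "'n \<Rightarrow> real"
  assumes P: "row_stochastic P" and irr: "irreducible_mat P" and s: "s \<in> S"
    and harmonic: "\<And>j. j \<notin> S \<Longrightarrow> f j = (\<Sum>p\<in>UNIV. P $ j $ p * f p)"
    and boundary: "\<And>j. j \<in> S \<Longrightarrow> f j = 0"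
  shows "f j \<le> 0"
proof -
  define M where "M = Max (range f)"
  have fM: "f q \<le> M" for q unfolding M_def by (rule Max_ge) auto
  have "M \<in> range f" unfolding M_def by (rule Max_in) auto
  then obtain j0 where j0: "f j0 = M" by auto
  have propagate: "f p = M" if "f q = M" "q \<notin> S" "(q, p) \<in> edges P" for q p
  proof -
    have "(\<Sum>p\<in>UNIV. P $ q $ p * (M - f p)) = M * (\<Sum>p\<in>UNIV. P $ q $ p) - (\<Sum>p\<in>UNIV. P $ q $ p * f p)"
      by (simp add: algebra_simps sum_subtractf sum_distrib_left)
    also have "\<dots> = 0" using harmonic[OF that(2)] row_stochastic_row_sum[OF P, of q] that(1) by simp
    finally have "\<forall>p\<in>UNIV. P $ q $ p * (M - f p) = 0"
      using sum_nonneg_eq_0_iff[of UNIV "\<lambda>p. P $ q $ p * (M - f p)"] row_stochastic_nonneg[OF P] fM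
      by auto
    then show ?thesis using that(3) unfolding edges_def by force
  qed
  have "(j0, s) \<in> (edges P)\<^sup>*" using irr unfolding irreducible_mat_def by blast
  then have "f s = M \<or> (\<exists>s'\<in>S. f s' = M)"
  proof (induction rule: rtrancl_induct)
    case base
    then show ?case using j0 by simp
  next
    case (step y y')
    then show ?case using propagate by blast
  qed
  then have "M = 0" using boundary s by auto
  then show ?thesis using fM by simp
qed

lemma Hmat_harmonic:
  assumes P: "row_stochastic P" and irr: "irreducible_mat P" and z: "z \<in> cbox 0 1"
    and s: "z $ s = 1" and j: "z $ j < 1"
  shows "Hmat P z $ j $ l = (\<Sum>p\<in>UNIV. P $ j $ p * Hmat P z $ p $ l)"
proof -
  have "Hmat P z $ j $ l = (\<Sum>p\<in>UNIV. Wmat P z $ j $ p * Hmat P z $ p $ l)"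
    by (rule matpow_limit_fixed[OF Wmat_matpow_tendsto_Hmat[OF P irr z s]])
  also have "\<dots> = (\<Sum>p\<in>UNIV. (1 - z $ j) * (P $ j $ p * Hmat P z $ p $ l)
      + (if p = j then z $ j * Hmat P z $ j $ l else 0))"
    unfolding Wmat_nth by (intro sum.cong) (auto simp: algebra_simps)
  also have "\<dots> = (1 - z $ j) * (\<Sum>p\<in>UNIV. P $ j $ p * Hmat P z $ p $ l) + z $ j * Hmat P z $ j $ l"
    by (simp add: sum.distrib sum_distrib_left)
  finally have "(1 - z $ j) * Hmat P z $ j $ l = (1 - z $ j) * (\<Sum>p\<in>UNIV. P $ j $ p * Hmat P z $ p $ l)"
    by (simp add: algebra_simps)
  then show ?thesis using j by simp
qed

text \<open>Off the stubborn agents the columns of \<open>H(z)\<close> are \<open>P\<close>-harmonic, and on them they are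
  prescribed; by the maximum principle \<open>H(z)\<close> only depends on which agents are stubborn.\<close>

lemma Hmat_eq_if_same_stubborn:
  fixes P :: "real^'n^'n"
  assumes P: "row_stochastic P" and irr: "irreducible_mat P"
    and z: "z \<in> cbox 0 1" and z': "z' \<in> cbox 0 1"
    and same: "\<And>j. z $ j = 1 \<longleftrightarrow> z' $ j = 1" and s: "z $ s = 1"
  shows "Hmat P z = Hmat P z'"
proof -
  define S where "S = {j. z $ j = 1}"
  have s': "z' $ s = 1" using same s by simp
  have "Hmat P z $ j $ l = Hmat P z' $ j $ l" for j l
  proof -
    define f where "f j = Hmat P z $ j $ l - Hmat P z' $ j $ l" for j
    have lt: "z $ j < 1" "z' $ j < 1" if "j \<notin> S" for j
      using that z z' same[of j] unfolding S_def mem_box_cart by (auto simp: less_le)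
    have harmonic: "f j = (\<Sum>p\<in>UNIV. P $ j $ p * f p)" if "j \<notin> S" for j
      using Hmat_harmonic[OF P irr z s lt(1)[OF that]] Hmat_harmonic[OF P irr z' s' lt(2)[OF that]]
      unfolding f_def by (simp add: sum_subtractf right_diff_distrib)
    have boundary: "f j = 0" if "j \<in> S" for j
      using that Hmat_stubborn_row[OF P irr z s] Hmat_stubborn_row[OF P irr z' s'] same
      unfolding S_def f_def by auto
    have "s \<in> S" using s unfolding S_def by simp
    from irreducible_harmonic_le_0[OF P irr this harmonic boundary]
      irreducible_harmonic_le_0[OF P irr this, of "\<lambda>j. - f j"] harmonic boundary
    have "f j \<le> 0" "- f j \<le> 0" by (auto simp: sum_negf)
    then show ?thesis unfolding f_def by simp
  qed
  then show ?thesis by (simp add: vec_eq_iff)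
qed

section \<open>Costs and best responses\<close>

lemma upd_nth [simp]: "upd z k x $ j = (if j = k then x else z $ j)"
  by (simp add: upd_def)

lemma cost_stubborn_self:
  assumes P: "row_stochastic P" and irr: "irreducible_mat P" and z: "z \<in> cbox 0 1"
    and k: "z $ k = 1"
  shows "cost P \<sigma>2 k z = \<sigma>2 $ k"
proof -
  have "(Hmat P z $ k $ j)\<^sup>2 * \<sigma>2 $ j = (if j = k then \<sigma>2 $ k else 0)" for j
    using Hmat_stubborn_row[OF P irr z k k] by simp
  then show ?thesis unfolding cost_def by simp
qed

lemma cost_le_stubborn_max:
  assumes P: "row_stochastic P" and irr: "irreducible_mat P" and z: "z \<in> cbox 0 1"
    and s: "z $ s = 1" and \<sigma>: "\<And>j. 0 \<le> \<sigma>2 $ j" and c: "\<And>j. z $ j = 1 \<Longrightarrow> \<sigma>2 $ j \<le> c"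
  shows "cost P \<sigma>2 k z \<le> c"
proof -
  have H: "row_stochastic (Hmat P z)" by (rule row_stochastic_Hmat[OF P irr z s])
  have "(Hmat P z $ k $ j)\<^sup>2 * \<sigma>2 $ j \<le> Hmat P z $ k $ j * c" for j
  proof (cases "z $ j = 1")
    case True
    have h: "0 \<le> Hmat P z $ k $ j" "Hmat P z $ k $ j \<le> 1"
      using row_stochastic_nonneg[OF H] row_stochastic_le_1[OF H] by auto
    then have "(Hmat P z $ k $ j)\<^sup>2 * \<sigma>2 $ j \<le> Hmat P z $ k $ j * \<sigma>2 $ j"
      using \<sigma>[of j] by (simp add: power2_eq_square mult_right_le_one_le mult_right_mono)
    also have "\<dots> \<le> Hmat P z $ k $ j * c" using h c[OF True] by (simp add: mult_left_mono)
    finally show ?thesis .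
  qed (simp add: Hmat_nonstubborn_col[OF P irr z s])
  then have "cost P \<sigma>2 k z \<le> (\<Sum>j\<in>UNIV. Hmat P z $ k $ j * c)"
    unfolding cost_def by (intro sum_mono)
  also have "\<dots> = c" using row_stochastic_row_sum[OF H] by (simp flip: sum_distrib_right)
  finally show ?thesis .
qed

lemma cost_no_stubborn:
  fixes P :: "real^'n^'n"
  assumes P: "row_stochastic P" and irr: "irreducible_mat P" and ap: "aperiodic_mat P"
    and st: "stationary P \<mu>" and \<mu>: "\<And>j. 0 < \<mu> $ j"
    and z: "z \<in> cbox 0 1" and no_stubborn: "\<And>i. z $ i < 1"
  shows "cost P \<sigma>2 k z =
    ((\<mu> $ k / (1 - z $ k))\<^sup>2 * \<sigma>2 $ k + (\<Sum>j\<in>UNIV - {k}. (\<mu> $ j / (1 - z $ j))\<^sup>2 * \<sigma>2 $ j))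
    / (\<mu> $ k / (1 - z $ k) + (\<Sum>j\<in>UNIV - {k}. \<mu> $ j / (1 - z $ j)))\<^sup>2"
proof -
  define w where "w j = \<mu> $ j / (1 - z $ j)" for j
  define N where "N = (\<Sum>j\<in>UNIV. w j)"
  have "Hmat P z $ k $ j = w j / N" for j
    unfolding w_def N_def by (rule Hmat_no_stubborn[OF P irr ap st \<mu> z no_stubborn])
  then have "cost P \<sigma>2 k z = (\<Sum>j\<in>UNIV. (w j)\<^sup>2 * \<sigma>2 $ j) / N\<^sup>2"
    unfolding cost_def by (simp add: sum_divide_distrib power_divide)
  then show ?thesis unfolding N_def w_def by (simp add: sum.remove)
qed

definition unit_argmin :: "(real \<Rightarrow> real) \<Rightarrow> real set" where
  "unit_argmin f = {x \<in> {0..1}. \<forall>y\<in>{0..1}. f x \<le> f y}"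

lemma best_resp_eq_unit_argmin: "best_resp P \<sigma>2 k z = unit_argmin (\<lambda>x. cost P \<sigma>2 k (upd z k x))"
  unfolding best_resp_def unit_argmin_def ..

lemma unit_argmin_eq_singleton:
  assumes "y0 \<in> {0..1}" "\<And>x. x \<in> {0..1} \<Longrightarrow> x \<noteq> y0 \<Longrightarrow> f y0 < f x"
  shows "unit_argmin f = {y0}"
proof -
  have "f y0 \<le> f y" if "y \<in> {0..1}" for y
    using assms(2)[OF that] by (cases "y = y0") auto
  moreover have "\<not> f x \<le> f y0" if "x \<in> {0..1}" "x \<noteq> y0" for x
    using assms(2)[OF that] by simp
  ultimately show ?thesis using assms(1) unfolding unit_argmin_def by (auto simp del: atLeastAtMost_iff)
qed

lemma unit_argmin_cases_Ico:
  assumes sub: "{0..<1} \<subseteq> unit_argmin f"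
  shows "unit_argmin f = {0..<1} \<or> unit_argmin f = {0..1}"
proof (cases "1 \<in> unit_argmin f")
  case True
  have "x \<in> unit_argmin f" if "x \<in> {0..1}" for x
    using that True sub by (cases "x = 1") auto
  then show ?thesis unfolding unit_argmin_def by blast
next
  case False
  have "x \<in> {0..<1}" if "x \<in> unit_argmin f" for x
    using that False unfolding unit_argmin_def by (cases "x = 1") auto
  then show ?thesis using sub by blast
qed

text \<open>For \<open>x < 1\<close> the cost of agent \<open>k\<close> has the form \<open>(u\<^sup>2 s + c) / (u + b)\<^sup>2\<close> in
  \<open>u = \<mu>\<^sub>k / (1 - x) \<ge> \<mu>\<^sub>k\<close>; it is minimised at \<open>u = max \<mu>\<^sub>k (c / (s b))\<close>.\<close>

lemma quadratic_ratio_strict_min: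
  fixes s b c a u :: real
  assumes s: "0 < s" and b: "0 < b" and c: "0 < c" and a: "0 < a" and u: "a \<le> u"
    and v: "v = max a (c / (s * b))" and uv: "u \<noteq> v"
  shows "(v\<^sup>2 * s + c) / (v + b)\<^sup>2 < (u\<^sup>2 * s + c) / (u + b)\<^sup>2"
proof -
  have vpos: "0 < v" using v a by auto
  have upos: "0 < u" using u a by auto
  have key: "(u\<^sup>2 * s + c) * (v + b)\<^sup>2 - (v\<^sup>2 * s + c) * (u + b)\<^sup>2
        = (u - v) * (s * b * (2 * u * v + b * u + b * v) - c * (u + v + 2 * b))"
    by (simp add: algebra_simps power2_eq_square)
  have pos: "0 < (u - v) * (s * b * (2 * u * v + b * u + b * v) - c * (u + v + 2 * b))"
  proof (cases "a \<le> c / (s * b)")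
    case True
    then have "c = s * b * v" using v s b by (simp add: field_simps)
    then have "(u - v) * (s * b * (2 * u * v + b * u + b * v) - c * (u + v + 2 * b))
          = s * b * (v + b) * (u - v)\<^sup>2"
      by (simp add: algebra_simps power2_eq_square)
    also have "\<dots> > 0" using s b vpos uv by simp
    finally show ?thesis .
  next
    case False
    then have va: "v = a" and ca: "c < s * b * a" using v s b by (auto simp: field_simps)
    have ua: "a < u" using u uv va by simp
    have sb: "0 < s * b" using s b by simp
    have cu: "c < s * b * u" using ca mult_strict_left_mono[OF ua sb] by simp
    have cv: "c < s * b * v" using ca va by simp
    have "c * u < s * b * v * u" using mult_strict_right_mono[OF cv upos] .
    moreover have "c * v < s * b * u * v" using mult_strict_right_mono[OF cu vpos] .
    moreover have "c * b < s * b * v * b" using mult_strict_right_mono[OF cv b] .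
    moreover have "c * b < s * b * u * b" using mult_strict_right_mono[OF cu b] .
    ultimately have "0 < s * b * (2 * u * v + b * u + b * v) - c * (u + v + 2 * b)"
      by (simp add: algebra_simps)
    then show ?thesis using ua va by simp
  qed
  have "0 < (v + b)\<^sup>2" "0 < (u + b)\<^sup>2" using vpos upos b by auto
  then show ?thesis using key pos by (simp add: divide_less_eq less_divide_eq field_simps)
qed

lemma quadratic_ratio_min_lt:
  fixes s b c a :: real
  assumes s: "0 < s" and b: "0 < b" and a: "0 < a" and v: "v = max a (c / (s * b))"
  shows "(v\<^sup>2 * s + c) / (v + b)\<^sup>2 < s"
proof -
  have vpos: "0 < v" using v a by auto
  have "c \<le> s * b * v"
  proof -
    have "c / (s * b) \<le> v" using v by simp
    then show ?thesis using s b by (simp add: field_simps)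
  qed
  moreover have "s * (v + b)\<^sup>2 - (v\<^sup>2 * s + c) = 2 * s * b * v + s * b * b - c"
    by (simp add: algebra_simps power2_eq_square)
  moreover have "0 < s * b * v" "0 < s * b * b" using s b vpos by simp_all
  ultimately have "v\<^sup>2 * s + c < s * (v + b)\<^sup>2" by linarith
  moreover have "0 < (v + b)\<^sup>2" using vpos b by auto
  ultimately show ?thesis by (simp add: divide_less_eq)
qed

lemma unit_argmin_quadratic_ratio:
  fixes f :: "real \<Rightarrow> real"
  assumes s: "0 < s" and a: "0 < a" and bc: "(b = 0 \<and> c = 0) \<or> (0 < b \<and> 0 < c)"
    and f1: "f 1 = s"
    and f: "\<And>x. 0 \<le> x \<Longrightarrow> x < 1 \<Longrightarrow> f x = ((a / (1 - x))\<^sup>2 * s + c) / (a / (1 - x) + b)\<^sup>2"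
  shows "unit_argmin f = {0..1} \<or> (\<exists>y0. 0 \<le> y0 \<and> y0 < 1 \<and> unit_argmin f = {y0})"
  using bc
proof
  assume "b = 0 \<and> c = 0"
  then have "f x = s" if "x \<in> {0..1}" for x
    using that f1 f[of x] a by (cases "x = 1") auto
  then show ?thesis unfolding unit_argmin_def by auto
next
  assume bc: "0 < b \<and> 0 < c"
  define v where "v = max a (c / (s * b))"
  define y0 where "y0 = 1 - a / v"
  have v: "0 < v" "a \<le> v" unfolding v_def using a by auto
  have y0: "0 \<le> y0" "y0 < 1" unfolding y0_def using a v by (auto simp: field_simps)
  have fy0: "f y0 = (v\<^sup>2 * s + c) / (v + b)\<^sup>2" using f[OF y0] a v unfolding y0_def by simp
  have "f y0 < f x" if x: "x \<in> {0..1}" "x \<noteq> y0" for x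
  proof (cases "x = 1")
    case True
    then show ?thesis using quadratic_ratio_min_lt[OF s _ a v_def] bc fy0 f1 by simp
  next
    case False
    then have x1: "x < 1" using x by simp
    have "a / (1 - x) \<noteq> v"
    proof
      assume "a / (1 - x) = v"
      then have "x = y0" unfolding y0_def using a x1 v by (auto simp: field_simps)
      then show False using x by simp
    qed
    moreover have "a \<le> a / (1 - x)" using a x x1 by (simp add: field_simps)
    ultimately show ?thesis
      using quadratic_ratio_strict_min[OF s _ _ a _ v_def] bc fy0 f[of x] x x1 by simp
  qed
  then have "unit_argmin f = {y0}" using y0 by (intro unit_argmin_eq_singleton) auto
  then show ?thesis using y0 by blast
qed

lemma best_resp_no_other_stubborn:
  fixes P :: "real^'n^'n"
  assumes P: "row_stochastic P" and irr: "irreducible_mat P" and ap: "aperiodic_mat P"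
    and \<sigma>: "\<And>j. 0 < \<sigma>2 $ j" and z: "z \<in> cbox 0 1" and others: "\<And>j. j \<noteq> k \<Longrightarrow> z $ j < 1"
  shows "best_resp P \<sigma>2 k z = {0..1} \<or> (\<exists>y0. 0 \<le> y0 \<and> y0 < 1 \<and> best_resp P \<sigma>2 k z = {y0})"
proof -
  obtain \<mu> where st: "stationary P \<mu>" and \<mu>: "\<And>j. 0 < \<mu> $ j"
    using stationary_pos_exists[OF P irr ap] by blast
  have zx: "upd z k x \<in> cbox 0 1" if "0 \<le> x" "x \<le> 1" for x
    using that z by (simp add: mem_box_cart)
  define b where "b = (\<Sum>j\<in>UNIV - {k}. \<mu> $ j / (1 - z $ j))"
  define c where "c = (\<Sum>j\<in>UNIV - {k}. (\<mu> $ j / (1 - z $ j))\<^sup>2 * \<sigma>2 $ j)"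
  have bc: "(b = 0 \<and> c = 0) \<or> (0 < b \<and> 0 < c)"
  proof (cases "UNIV - {k} = {}")
    case False
    have w: "0 < \<mu> $ j / (1 - z $ j)" if "j \<in> UNIV - {k}" for j
      using \<mu>[of j] others that by simp
    then have "0 < (\<mu> $ j / (1 - z $ j))\<^sup>2 * \<sigma>2 $ j" if "j \<in> UNIV - {k}" for j
      using mult_pos_pos[OF zero_less_power[OF w[OF that]] \<sigma>[of j]] by simp
    then have "0 < b" "0 < c" unfolding b_def c_def using False w by (intro sum_pos; simp)+
    then show ?thesis by simp
  qed (simp only: b_def c_def sum.empty; simp)
  have "cost P \<sigma>2 k (upd z k x) = ((\<mu> $ k / (1 - x))\<^sup>2 * \<sigma>2 $ k + c) / (\<mu> $ k / (1 - x) + b)\<^sup>2"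
    if "0 \<le> x" "x < 1" for x
  proof -
    have zx': "upd z k x \<in> cbox 0 1" using that by (intro zx) auto
    have no_stubborn: "upd z k x $ i < 1" for i using that others[of i] by simp
    have "(\<Sum>j\<in>UNIV - {k}. \<mu> $ j / (1 - upd z k x $ j)) = b"
      "(\<Sum>j\<in>UNIV - {k}. (\<mu> $ j / (1 - upd z k x $ j))\<^sup>2 * \<sigma>2 $ j) = c"
      unfolding b_def c_def by (auto intro!: sum.cong)
    then show ?thesis
      unfolding cost_no_stubborn[OF P irr ap st \<mu> zx' no_stubborn] by simp
  qed
  moreover have "cost P \<sigma>2 k (upd z k 1) = \<sigma>2 $ k"
    using zx by (intro cost_stubborn_self[OF P irr]) auto
  ultimately show ?thesis
    unfolding best_resp_eq_unit_argmin using \<mu> \<sigma> bc by (intro unit_argmin_quadratic_ratio) auto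
qed

lemma best_resp_other_stubborn:
  fixes P :: "real^'n^'n"
  assumes P: "row_stochastic P" and irr: "irreducible_mat P"
    and \<sigma>: "\<And>j. 0 < \<sigma>2 $ j" and z: "z \<in> cbox 0 1" and s: "s \<noteq> k" "z $ s = 1"
    and max: "\<And>j. z $ j = 1 \<Longrightarrow> \<sigma>2 $ j \<le> \<sigma>2 $ k"
  shows "best_resp P \<sigma>2 k z = {0..<1} \<or> best_resp P \<sigma>2 k z = {0..1}"
proof -
  define f where "f x = cost P \<sigma>2 k (upd z k x)" for x
  have zx: "upd z k x \<in> cbox 0 1" if "0 \<le> x" "x \<le> 1" for x
    using that z by (simp add: mem_box_cart)
  have f1: "f 1 = \<sigma>2 $ k"
    unfolding f_def using zx by (intro cost_stubborn_self[OF P irr]) auto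
  have f_const: "f x = f 0" if "0 \<le> x" "x < 1" for x
  proof -
    have "Hmat P (upd z k x) = Hmat P (upd z k 0)"
      using that s zx by (intro Hmat_eq_if_same_stubborn[OF P irr, where s=s]) auto
    then show ?thesis unfolding f_def cost_def by simp
  qed
  have "f 0 \<le> \<sigma>2 $ k"
    unfolding f_def using s \<sigma> max zx
    by (intro cost_le_stubborn_max[OF P irr, where s=s]) (auto simp: less_imp_le split: if_splits)
  then have "f x \<le> f y" if "0 \<le> x" "x < 1" "y \<in> {0..1}" for x y
    using f1 f_const[OF that(1,2)] f_const[of y] that(3) by (cases "y = 1") auto
  then have "{0..<1} \<subseteq> unit_argmin f" unfolding unit_argmin_def by auto
  then show ?thesis unfolding best_resp_eq_unit_argmin f_def by (rule unit_argmin_cases_Ico)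
qed

section \<open>The best response kernel\<close>

definition stubborn :: "real^'n \<Rightarrow> 'n set" where
  "stubborn z = {i. z $ i = 1}"

definition at_most_stubborn :: "nat \<Rightarrow> (real^'n) set" where
  "at_most_stubborn m = {z \<in> cbox 0 1. card (stubborn z) \<le> m}"

lemma at_most_stubborn_0_iff: "z \<in> at_most_stubborn 0 \<longleftrightarrow> z \<in> cbox 0 1 \<and> (\<forall>i. z $ i < 1)"
  unfolding at_most_stubborn_def stubborn_def by (auto simp: mem_box_cart less_le)

lemma at_most_stubborn_CARD: "z \<in> cbox 0 1 \<Longrightarrow> z \<in> at_most_stubborn CARD('n)"
  for z :: "real^'n"
  unfolding at_most_stubborn_def by (simp add: card_mono)

lemma at_most_stubborn_borel: "at_most_stubborn m \<in> sets (borel :: (real^'n) measure)"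
proof -
  have "at_most_stubborn m = cbox 0 1 \<inter> (\<Union>A\<in>{A. card A \<le> m}. {z::real^'n. \<forall>i. z $ i = 1 \<longrightarrow> i \<in> A})"
  proof (intro set_eqI iffI)
    fix z :: "real^'n"
    assume "z \<in> cbox 0 1 \<inter> (\<Union>A\<in>{A. card A \<le> m}. {z. \<forall>i. z $ i = 1 \<longrightarrow> i \<in> A})"
    then obtain A where "z \<in> cbox 0 1" "card A \<le> m" "stubborn z \<subseteq> A"
      unfolding stubborn_def by auto
    moreover have "card (stubborn z) \<le> card A" by (rule card_mono) (use calculation in auto)
    ultimately show "z \<in> at_most_stubborn m" unfolding at_most_stubborn_def by simp
  qed (auto simp: at_most_stubborn_def stubborn_def)
  also have "\<dots> \<in> sets borel" by (intro sets.Int sets.finite_UN) (auto intro: borel_closed)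
  finally show ?thesis .
qed

lemma unif_singleton: "unif {b} = return borel b"
  unfolding unif_def by auto

lemma sets_unif: "sets (unif B) = sets borel"
  unfolding unif_def by (auto simp: sets_uniform_measure)

lemma emeasure_density_le: "emeasure (density M f) X \<le> (\<integral>\<^sup>+x. f x * indicator X x \<partial>M)"
  unfolding density_def emeasure_measure_of_conv by (simp split: if_split)

lemma emeasure_unif_eq_0:
  assumes sing: "\<And>b. B = {b} \<Longrightarrow> b \<notin> X" and X: "X \<in> sets borel"
    and null: "B \<inter> X \<subseteq> Y" "Y \<in> sets lborel" "emeasure lborel Y = 0"
  shows "emeasure (unif B) X = 0"
proof (cases "\<exists>b. B = {b}")
  case True
  then show ?thesis using sing X by (auto simp: unif_singleton emeasure_return)
next
  case False
  then have "emeasure (unif B) X \<le> (\<integral>\<^sup>+x. (indicator B x / emeasure lborel B) * indicator X x \<partial>lborel)"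
    unfolding unif_def uniform_measure_def by (simp add: emeasure_density_le)
  also have "\<dots> \<le> (\<integral>\<^sup>+x. \<infinity> * indicator Y x \<partial>lborel)"
    using null(1) by (intro nn_integral_mono) (auto simp: indicator_def)
  also have "\<dots> = 0" using null(2,3) by (simp add: nn_integral_cmult_indicator)
  finally show ?thesis by simp
qed

lemma Icc_01_not_singleton: "{0..1::real} \<noteq> {b}"
  using atLeastAtMost_singleton_iff[of 0 1 b] by auto

lemma Ico_01_not_singleton: "{0..<1::real} \<noteq> {b}"
proof
  assume "{0..<1::real} = {b}"
  moreover have "0 \<in> {0..<1::real}" "1 / 2 \<in> {0..<1::real}" by auto
  ultimately show False by auto
qed

lemma emeasure_unif_Ico_01:
  assumes "B = {0..1} \<or> B = {0..<1} \<or> (\<exists>y0. 0 \<le> y0 \<and> y0 < 1 \<and> B = {y0})"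
  shows "emeasure (unif B) {0..<1::real} = 1"
proof -
  consider "B = {0..1}" | "B = {0..<1}" | y0 where "0 \<le> y0" "y0 < 1" "B = {y0}"
    using assms by blast
  then show ?thesis
  proof cases
    case 1
    then have "unif B = uniform_measure lborel {0..1}"
      unfolding unif_def using Icc_01_not_singleton by auto
    moreover have "{0..1::real} \<inter> {0..<1} = {0..<1}" by auto
    ultimately show ?thesis by (simp add: emeasure_uniform_measure)
  next
    case 2
    then have "unif B = uniform_measure lborel {0..<1}"
      unfolding unif_def using Ico_01_not_singleton by auto
    then show ?thesis by (simp add: emeasure_uniform_measure)
  next
    case 3
    then show ?thesis by (simp add: unif_singleton emeasure_return)
  qed
qed

lemma upd_measurable: "(\<lambda>x::real. upd z k x) \<in> borel_measurable borel"
proof -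
  have "upd z k = (\<lambda>x. z + (x - z $ k) *\<^sub>R axis k 1)" by (auto simp: vec_eq_iff axis_def)
  then show ?thesis by (auto intro!: borel_measurable_continuous_onI continuous_intros)
qed

lemma br_kernel_eq_0:
  "(\<And>k. emeasure (unif (best_resp P \<sigma>2 k z)) {x. upd z k x \<in> A} = 0) \<Longrightarrow> br_kernel P \<sigma>2 z A = 0"
  unfolding br_kernel_def by simp

lemma br_kernel_ge_inv_card:
  fixes z :: "real^'n"
  assumes unif: "emeasure (unif (best_resp P \<sigma>2 k z)) {0..<1} = 1" and A: "A \<in> sets borel"
    and upd: "\<And>x. 0 \<le> x \<Longrightarrow> x < 1 \<Longrightarrow> upd z k x \<in> A"
  shows "1 / of_nat CARD('n) \<le> br_kernel P \<sigma>2 z A"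
proof -
  have "1 \<le> emeasure (unif (best_resp P \<sigma>2 k z)) {x. upd z k x \<in> A}"
    unfolding unif[symmetric] using upd measurable_sets[OF upd_measurable A, of z k]
    by (intro emeasure_mono) (auto simp: sets_unif vimage_def)
  also have "\<dots> \<le> (\<Sum>k\<in>UNIV. emeasure (unif (best_resp P \<sigma>2 k z)) {x. upd z k x \<in> A})"
    by (intro member_le_sum) auto
  finally show ?thesis unfolding br_kernel_def by (rule divide_right_mono_ennreal)
qed

lemma br_kernel_cbox_compl:
  assumes "z \<in> cbox 0 1"
  shows "br_kernel P \<sigma>2 z (- cbox 0 1) = 0"
proof (rule br_kernel_eq_0)
  fix k
  have "{x. upd z k x \<in> - cbox 0 1} = - {0..1}"
    using assms by (auto simp: mem_box_cart)
  then show "emeasure (unif (best_resp P \<sigma>2 k z)) {x. upd z k x \<in> - cbox 0 1} = 0"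
    by (auto intro!: emeasure_unif_eq_0[where Y="{}"] simp: best_resp_def)
qed

context
  fixes P :: "real^'n^'n" and \<sigma>2 :: "real^'n"
  assumes P: "row_stochastic P" and irr: "irreducible_mat P" and ap: "aperiodic_mat P"
    and \<sigma>: "\<And>j. 0 < \<sigma>2 $ j"
begin

lemma br_kernel_no_stubborn_escape:
  assumes z: "z \<in> at_most_stubborn 0"
  shows "br_kernel P \<sigma>2 z (- at_most_stubborn 0) = 0"
proof (rule br_kernel_eq_0)
  fix k
  have X: "{x. upd z k x \<in> - at_most_stubborn 0} = - {0..<1}"
    using z by (auto simp: at_most_stubborn_0_iff mem_box_cart)
  have "best_resp P \<sigma>2 k z = {0..1} \<or> (\<exists>y0. 0 \<le> y0 \<and> y0 < 1 \<and> best_resp P \<sigma>2 k z = {y0})"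
    using z unfolding at_most_stubborn_0_iff by (intro best_resp_no_other_stubborn[OF P irr ap \<sigma>]) auto
  then have "b \<notin> - {0..<1}" if "best_resp P \<sigma>2 k z = {b}" for b
    using that Icc_01_not_singleton[of b] by auto
  moreover have "best_resp P \<sigma>2 k z \<inter> - {0..<1} \<subseteq> {1}" unfolding best_resp_def by auto
  ultimately show "emeasure (unif (best_resp P \<sigma>2 k z)) {x. upd z k x \<in> - at_most_stubborn 0} = 0"
    unfolding X by (intro emeasure_unif_eq_0[where Y="{1}"]) auto
qed

text \<open>As \<open>k\<close> has the largest variance among the stubborn agents, staying stubborn is never
  strictly better for \<open>k\<close> than any value below \<open>1\<close>.\<close>

lemma emeasure_unif_best_resp_Ico_01:
  assumes z: "z \<in> cbox 0 1" and max: "\<And>j. z $ j = 1 \<Longrightarrow> \<sigma>2 $ j \<le> \<sigma>2 $ k"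
  shows "emeasure (unif (best_resp P \<sigma>2 k z)) {0..<1} = 1"
proof (rule emeasure_unif_Ico_01)
  show "best_resp P \<sigma>2 k z = {0..1} \<or> best_resp P \<sigma>2 k z = {0..<1} \<or>
      (\<exists>y0. 0 \<le> y0 \<and> y0 < 1 \<and> best_resp P \<sigma>2 k z = {y0})"
  proof (cases "\<exists>s. s \<noteq> k \<and> z $ s = 1")
    case True
    then show ?thesis using best_resp_other_stubborn[OF P irr \<sigma> z _ _ max] by blast
  next
    case False
    then have "\<And>j. j \<noteq> k \<Longrightarrow> z $ j < 1" using z by (auto simp: mem_box_cart less_le)
    then show ?thesis using best_resp_no_other_stubborn[OF P irr ap \<sigma> z] by blast
  qed
qed

lemma br_kernel_at_most_stubborn_ge:
  assumes z: "z \<in> at_most_stubborn m"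
  shows "1 / of_nat CARD('n) \<le> br_kernel P \<sigma>2 z (at_most_stubborn (m - 1))"
proof -
  have zb: "z \<in> cbox 0 1" and card: "card (stubborn z) \<le> m"
    using z unfolding at_most_stubborn_def by auto
  obtain k where max: "\<And>j. z $ j = 1 \<Longrightarrow> \<sigma>2 $ j \<le> \<sigma>2 $ k"
    and k: "stubborn z \<noteq> {} \<Longrightarrow> k \<in> stubborn z"
  proof (cases "stubborn z = {}")
    case False
    then have "Max ((\<lambda>j. \<sigma>2 $ j) ` stubborn z) \<in> (\<lambda>j. \<sigma>2 $ j) ` stubborn z"
      by (intro Max_in) auto
    then obtain k where k: "k \<in> stubborn z" "\<sigma>2 $ k = Max ((\<lambda>j. \<sigma>2 $ j) ` stubborn z)"
      by (metis imageE)
    moreover have "\<sigma>2 $ j \<le> \<sigma>2 $ k" if "z $ j = 1" for j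
      unfolding k(2) using that by (intro Max_ge) (auto simp: stubborn_def)
    ultimately show ?thesis using that by blast
  qed (auto simp: stubborn_def)
  have "card (stubborn z - {k}) \<le> m - 1"
    using card k by (cases "stubborn z = {}") auto
  then have "upd z k x \<in> at_most_stubborn (m - 1)" if "0 \<le> x" "x < 1" for x
  proof -
    have "stubborn (upd z k x) = stubborn z - {k}"
      using that unfolding stubborn_def by (auto simp:)
    moreover have "upd z k x \<in> cbox 0 1" using that zb by (simp add: mem_box_cart)
    ultimately show ?thesis using \<open>card (stubborn z - {k}) \<le> m - 1\<close>
      unfolding at_most_stubborn_def by simp
  qed
  then show ?thesis
    using emeasure_unif_best_resp_Ico_01[OF zb max] at_most_stubborn_borel
    by (intro br_kernel_ge_inv_card) auto
qed

end

section \<open>The best response dynamics\<close>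

definition path_event :: "'a measure \<Rightarrow> (nat \<Rightarrow> 'a \<Rightarrow> 'b) \<Rightarrow> nat \<Rightarrow> (nat \<Rightarrow> 'b set) \<Rightarrow> 'a set" where
  "path_event M Z t A = {\<omega> \<in> space M. \<forall>s\<le>t. Z s \<omega> \<in> A s}"

context
  fixes M :: "'a measure" and P :: "real^'n^'n" and \<sigma>2 :: "real^'n"
    and Z :: "nat \<Rightarrow> 'a \<Rightarrow> real^'n"
  assumes dyn: "is_br_dynamics M P \<sigma>2 Z"
begin

lemma prob_space_br_dynamics: "prob_space M"
  using dyn unfolding is_br_dynamics_def by blast

lemma measurable_br_dynamics [measurable]: "Z t \<in> M \<rightarrow>\<^sub>M borel"
  using dyn unfolding is_br_dynamics_def by blast

lemma path_event_sets:
  assumes "\<And>s. A s \<in> sets borel"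
  shows "path_event M Z t A \<in> sets M"
proof -
  have "path_event M Z t A = space M \<inter> (\<Inter>s\<in>{..t}. Z s -` A s \<inter> space M)"
    unfolding path_event_def by auto
  also have "\<dots> \<in> sets M"
    using assms by (intro sets.Int sets.top sets.finite_INT measurable_sets[OF measurable_br_dynamics]) auto
  finally show ?thesis .
qed

lemma emeasure_path_event_Suc:
  assumes "\<And>s. A s \<in> sets borel"
  shows "emeasure M (path_event M Z (Suc t) A) =
    (\<integral>\<^sup>+ \<omega>. indicator (path_event M Z t A) \<omega> * br_kernel P \<sigma>2 (Z t \<omega>) (A (Suc t)) \<partial>M)"
  using dyn assms unfolding is_br_dynamics_def path_event_def by blast

lemma emeasure_path_event_Suc_ge:
  assumes A: "\<And>s. A s \<in> sets borel"
    and c: "\<And>\<omega>. \<omega> \<in> path_event M Z t A \<Longrightarrow> c \<le> br_kernel P \<sigma>2 (Z t \<omega>) (A (Suc t))"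
  shows "c * emeasure M (path_event M Z t A) \<le> emeasure M (path_event M Z (Suc t) A)"
proof -
  have "c * emeasure M (path_event M Z t A) = (\<integral>\<^sup>+ \<omega>. c * indicator (path_event M Z t A) \<omega> \<partial>M)"
    using path_event_sets[OF A] by (simp add: nn_integral_cmult_indicator)
  also have "\<dots> \<le> (\<integral>\<^sup>+ \<omega>. indicator (path_event M Z t A) \<omega> * br_kernel P \<sigma>2 (Z t \<omega>) (A (Suc t)) \<partial>M)"
    by (intro nn_integral_mono) (auto simp: indicator_def c)
  finally show ?thesis using emeasure_path_event_Suc[OF A] by simp
qed

lemma emeasure_path_event_add_ge:
  assumes A: "\<And>s. A s \<in> sets borel"
    and c: "\<And>s \<omega>. t \<le> s \<Longrightarrow> s < t + j \<Longrightarrow> \<omega> \<in> path_event M Z s A \<Longrightarrow>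
      c \<le> br_kernel P \<sigma>2 (Z s \<omega>) (A (Suc s))"
  shows "c ^ j * emeasure M (path_event M Z t A) \<le> emeasure M (path_event M Z (t + j) A)"
  using c
proof (induction j)
  case (Suc j)
  have "c ^ Suc j * emeasure M (path_event M Z t A) \<le> c * emeasure M (path_event M Z (t + j) A)"
    using Suc by (simp add: mult.assoc mult_left_mono)
  also have "\<dots> \<le> emeasure M (path_event M Z (t + Suc j) A)"
    using Suc.prems by (simp add: emeasure_path_event_Suc_ge[OF A])
  finally show ?case .
qed simp

lemma AE_br_step:
  assumes B: "B \<in> sets borel" and B': "B' \<in> sets borel"
    and kernel: "\<And>z. z \<in> B \<Longrightarrow> br_kernel P \<sigma>2 z (- B') = 0"
  shows "AE \<omega> in M. Z t \<omega> \<in> B \<longrightarrow> Z (Suc t) \<omega> \<in> B'"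
proof -
  define A where "A s = (if s = t then B else if s = Suc t then - B' else UNIV)" for s
  have A: "A s \<in> sets borel" for s unfolding A_def using B B' by auto
  have "br_kernel P \<sigma>2 (Z t \<omega>) (A (Suc t)) = 0" if "\<omega> \<in> path_event M Z t A" for \<omega>
    using that kernel unfolding path_event_def A_def by auto
  then have "emeasure M (path_event M Z (Suc t) A) = (\<integral>\<^sup>+ \<omega>. 0 \<partial>M)"
    unfolding emeasure_path_event_Suc[OF A] by (intro nn_integral_cong) (simp add: indicator_def)
  then have "path_event M Z (Suc t) A \<in> null_sets M"
    using path_event_sets[OF A] by (simp add: null_sets_def)
  moreover have "{\<omega> \<in> space M. \<not> (Z t \<omega> \<in> B \<longrightarrow> Z (Suc t) \<omega> \<in> B')} \<subseteq> path_event M Z (Suc t) A"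
    unfolding path_event_def A_def by (auto simp: le_Suc_eq)
  ultimately show ?thesis by (rule AE_I')
qed

lemma AE_br_invariant:
  assumes B: "B \<in> sets borel" and kernel: "\<And>z. z \<in> B \<Longrightarrow> br_kernel P \<sigma>2 z (- B) = 0"
  shows "AE \<omega> in M. \<forall>t d. Z t \<omega> \<in> B \<longrightarrow> Z (t + d) \<omega> \<in> B"
proof -
  have "AE \<omega> in M. \<forall>t. Z t \<omega> \<in> B \<longrightarrow> Z (Suc t) \<omega> \<in> B"
    using AE_br_step[OF B B kernel] by (simp add: AE_all_countable)
  then show ?thesis
  proof (rule eventually_mono, intro allI impI)
    fix \<omega> t d
    assume "\<forall>t. Z t \<omega> \<in> B \<longrightarrow> Z (Suc t) \<omega> \<in> B" "Z t \<omega> \<in> B"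
    then show "Z (t + d) \<omega> \<in> B" by (induction d) auto
  qed
qed

end

definition freeing_path :: "nat \<Rightarrow> nat \<Rightarrow> (real^'n) set" where
  "freeing_path t s = (if s \<le> t then cbox 0 1 - at_most_stubborn 0
    else at_most_stubborn (CARD('n) - (s - t)))"

context
  fixes M :: "'a measure" and P :: "real^'n^'n" and \<sigma>2 :: "real^'n"
    and Z :: "nat \<Rightarrow> 'a \<Rightarrow> real^'n"
  assumes dyn: "is_br_dynamics M P \<sigma>2 Z"
    and P: "row_stochastic P" and irr: "irreducible_mat P" and ap: "aperiodic_mat P"
    and \<sigma>: "\<And>j. 0 < \<sigma>2 $ j"
begin

interpretation prob_space M by (rule prob_space_br_dynamics[OF dyn])

text \<open>From any profile, within \<open>n\<close> steps all stubborn agents are freed with probability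
  at least \<open>(1/n)\<^sup>n\<close>: at each step the stubborn agent of largest variance is drawn.\<close>

lemma measure_freeing_path_ge:
  "(1 / real CARD('n)) ^ CARD('n) * measure M (path_event M Z t (\<lambda>_. cbox 0 1 - at_most_stubborn 0))
    \<le> measure M (path_event M Z (t + CARD('n)) (freeing_path t))"
proof -
  define n where "n = CARD('n)"
  have A: "freeing_path t s \<in> sets borel" for s
    unfolding freeing_path_def by (auto intro: at_most_stubborn_borel)
  have "1 / of_nat n \<le> br_kernel P \<sigma>2 (Z s \<omega>) (freeing_path t (Suc s))"
    if "t \<le> s" "\<omega> \<in> path_event M Z s (freeing_path t)" for s \<omega>
  proof -
    have "Z s \<omega> \<in> freeing_path t s" using that(2) unfolding path_event_def by auto
    then have "Z s \<omega> \<in> at_most_stubborn (n - (s - t))"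
      using that(1) at_most_stubborn_CARD[of "Z s \<omega>"] unfolding freeing_path_def n_def
      by (cases "s \<le> t") auto
    moreover have "freeing_path t (Suc s) = (at_most_stubborn (n - (s - t) - 1) :: (real^'n) set)"
      using that(1) unfolding freeing_path_def n_def by (simp add: Suc_diff_le)
    ultimately show ?thesis
      using br_kernel_at_most_stubborn_ge[OF P irr ap \<sigma>, of "Z s \<omega>" "n - (s - t)"]
      unfolding n_def by simp
  qed
  then have "(1 / of_nat n) ^ n * emeasure M (path_event M Z t (freeing_path t))
      \<le> emeasure M (path_event M Z (t + n) (freeing_path t))"
    by (intro emeasure_path_event_add_ge[OF dyn A])
  moreover have "path_event M Z t (freeing_path t) = path_event M Z t (\<lambda>_. cbox 0 1 - at_most_stubborn 0)"
    unfolding path_event_def freeing_path_def by auto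
  moreover have "(1 / of_nat n :: ennreal) = ennreal (1 / real n)"
    unfolding n_def by (simp add: ennreal_of_nat_eq_real_of_nat divide_ennreal[symmetric])
  ultimately show ?thesis
    unfolding n_def by (simp add: emeasure_eq_measure ennreal_power ennreal_mult[symmetric] ennreal_le_iff)
qed

lemma measure_never_no_stubborn_decay:
  defines "N t \<equiv> path_event M Z t (\<lambda>_. cbox 0 1 - at_most_stubborn 0)"
  shows "measure M (N (t + CARD('n))) \<le> (1 - (1 / real CARD('n)) ^ CARD('n)) * measure M (N t)"
proof -
  define n where "n = CARD('n)"
  define R where "R = path_event M Z (t + n) (freeing_path t)"
  have N: "N s \<in> sets M" for s
    unfolding N_def by (intro path_event_sets[OF dyn]) (auto intro: at_most_stubborn_borel)
  have R: "R \<in> sets M"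
    unfolding R_def freeing_path_def by (intro path_event_sets[OF dyn]) (auto intro: at_most_stubborn_borel)
  have R_sub: "R \<subseteq> N t"
  proof
    fix \<omega> assume "\<omega> \<in> R"
    then have "\<omega> \<in> space M" "\<forall>s\<le>t. Z s \<omega> \<in> freeing_path t s" unfolding R_def path_event_def by auto
    then show "\<omega> \<in> N t" unfolding N_def path_event_def freeing_path_def by simp
  qed
  have "freeing_path t (t + n) = (at_most_stubborn 0 :: (real^'n) set)" unfolding freeing_path_def n_def by simp
  then have "N (t + n) \<subseteq> N t - R" unfolding N_def R_def path_event_def by auto
  then have "measure M (N (t + n)) \<le> measure M (N t - R)"
    using N R by (intro finite_measure_mono) auto
  also have "\<dots> = measure M (N t) - measure M R" using N R R_sub by (rule finite_measure_Diff)
  also have "\<dots> \<le> (1 - (1 / real n) ^ n) * measure M (N t)"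
    using measure_freeing_path_ge[of t] unfolding N_def R_def n_def by (simp add: algebra_simps)
  finally show ?thesis unfolding n_def .
qed

lemma AE_eventually_no_stubborn:
  assumes cube: "AE \<omega> in M. \<forall>t. Z t \<omega> \<in> cbox 0 1"
  shows "AE \<omega> in M. \<exists>t. Z t \<omega> \<in> at_most_stubborn 0"
proof -
  define N where "N t = path_event M Z t (\<lambda>_. cbox 0 1 - at_most_stubborn 0)" for t
  define n where "n = CARD('n)"
  define c where "c = (1 / real n) ^ n"
  have N: "N t \<in> sets M" for t unfolding N_def by (intro path_event_sets[OF dyn]) (auto intro: at_most_stubborn_borel)
  have c: "0 < c" "c \<le> 1" unfolding c_def n_def by (auto simp: power_le_one)
  have geom: "measure M (N (k * n)) \<le> (1 - c) ^ k" for k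
  proof (induction k)
    case (Suc k)
    have "measure M (N (Suc k * n)) \<le> (1 - c) * measure M (N (k * n))"
      using measure_never_no_stubborn_decay[of "k * n"] unfolding N_def c_def n_def by (simp add: add.commute)
    also have "\<dots> \<le> (1 - c) * (1 - c) ^ k" using Suc c by (intro mult_left_mono) auto
    finally show ?case by simp
  qed simp
  have "measure M (\<Inter>t. N t) \<le> (1 - c) ^ k" for k
    using geom[of k] finite_measure_mono[of "\<Inter>t. N t" "N (k * n)"] N by fastforce
  then have "measure M (\<Inter>t. N t) \<le> 0"
    using c by (intro LIMSEQ_le_const[OF LIMSEQ_power_zero[of "1 - c"]]) auto
  then have "(\<Inter>t. N t) \<in> null_sets M"
    using N by (simp add: emeasure_eq_measure null_sets_def measure_nonneg antisym)
  then have "AE \<omega> in M. \<omega> \<notin> (\<Inter>t. N t)" by (rule AE_not_in)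
  with cube AE_space show ?thesis
    by eventually_elim (auto simp: N_def path_event_def)
qed

lemma AE_eventually_always_no_stubborn:
  assumes init: "AE \<omega> in M. \<forall>i. Z 0 \<omega> $ i \<in> {0..1}"
  shows "AE \<omega> in M. \<exists>t. \<forall>s\<ge>t. \<forall>i. Z s \<omega> $ i < 1"
proof -
  have "AE \<omega> in M. \<forall>t d. Z t \<omega> \<in> cbox 0 1 \<longrightarrow> Z (t + d) \<omega> \<in> cbox 0 1"
    by (rule AE_br_invariant[OF dyn]) (auto intro: br_kernel_cbox_compl)
  with init have cube: "AE \<omega> in M. \<forall>t. Z t \<omega> \<in> cbox 0 1"
  proof eventually_elim
    case (elim \<omega>)
    then show ?case using elim(2)[rule_format, of 0] by (simp add: mem_box_cart)
  qed
  have "AE \<omega> in M. \<forall>t d. Z t \<omega> \<in> at_most_stubborn 0 \<longrightarrow> Z (t + d) \<omega> \<in> at_most_stubborn 0"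
    using br_kernel_no_stubborn_escape[OF P irr ap \<sigma>]
    by (intro AE_br_invariant[OF dyn at_most_stubborn_borel])
  with AE_eventually_no_stubborn[OF cube] show ?thesis
  proof eventually_elim
    case (elim \<omega>)
    then obtain t where "Z t \<omega> \<in> at_most_stubborn 0" by blast
    then have "Z s \<omega> \<in> at_most_stubborn 0" if "t \<le> s" for s
      using elim(2)[rule_format, of t "s - t"] that by simp
    then show ?case by (auto simp: at_most_stubborn_0_iff)
  qed
qed

end

lemma measurable_enat_Least:
  assumes "\<And>t. Measurable.pred M (Q t)"
  shows "(\<lambda>\<omega>. if \<exists>t. Q t \<omega> then enat (LEAST t. Q t \<omega>) else \<infinity>) \<in> M \<rightarrow>\<^sub>M count_space UNIV"
  using assms by measurable

lemma enat_Least_le_enat_imp: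
  assumes mono: "\<And>t t'. Q t \<Longrightarrow> t \<le> t' \<Longrightarrow> Q t'"
    and le: "(if \<exists>t. Q t then enat (LEAST t. Q t) else \<infinity>) \<le> enat t"
  shows "Q t"
proof -
  have ex: "\<exists>t. Q t" and "(LEAST t. Q t) \<le> t" using le by (auto split: if_splits)
  then show ?thesis using mono[OF LeastI_ex[OF ex]] by blast
qed

theorem lemma3:
  fixes M :: "'a measure" and P :: "real^'n^'n" and \<sigma>2 :: "real^'n"
    and Z :: "nat \<Rightarrow> 'a \<Rightarrow> real^'n"
  assumes "row_stochastic P" and "irreducible_mat P" and "aperiodic_mat P"
    and "\<forall>j. \<sigma>2 $ j > 0"
    and "is_br_dynamics M P \<sigma>2 Z"
    and "AE \<omega> in M. \<forall>i. Z 0 \<omega> $ i \<in> {0..1}"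
  shows "\<exists>T :: 'a \<Rightarrow> enat. T \<in> M \<rightarrow>\<^sub>M count_space UNIV \<and> (AE \<omega> in M. T \<omega> < \<infinity>) \<and>
           (\<forall>\<omega>\<in>space M. \<forall>t::nat. T \<omega> \<le> enat t \<longrightarrow> (\<forall>i. Z t \<omega> $ i < 1))"
proof -
  note dyn = assms(5) and [measurable] = measurable_br_dynamics[OF assms(5)]
  have \<sigma>: "\<And>j. 0 < \<sigma>2 $ j" using assms(4) by blast
  define Q where "Q t \<omega> \<longleftrightarrow> (\<forall>s\<ge>t. \<forall>i. Z s \<omega> $ i < 1)" for t \<omega>
  define T where "T \<omega> = (if \<exists>t. Q t \<omega> then enat (LEAST t. Q t \<omega>) else \<infinity>)" for \<omega>
  have "T \<in> M \<rightarrow>\<^sub>M count_space UNIV"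
    unfolding T_def by (rule measurable_enat_Least) (unfold Q_def, measurable)
  moreover have "AE \<omega> in M. \<exists>t. Q t \<omega>"
    unfolding Q_def by (rule AE_eventually_always_no_stubborn[OF dyn assms(1-3) \<sigma> assms(6)])
  then have "AE \<omega> in M. T \<omega> < \<infinity>" by eventually_elim (simp add: T_def)
  moreover have "Q t \<omega>" if "T \<omega> \<le> enat t" for \<omega> t
    using that unfolding T_def by (rule enat_Least_le_enat_imp[rotated]) (auto simp: Q_def)
  ultimately show ?thesis unfolding Q_def by blast
qed

end
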